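(* For every finite connected graph $G=(V,E)$ with root $O$ and every $\mathbf p=(p_e)_{e\in E}\in(0,1]^E$, the stochastic search game $\langle G,O,\mathbf p\rangle$ has a value $\mathrm{val}(\mathbf p)$, and both players have optimal strategies.
   Context: Stochastic search game $\langle G,O,\mathbf p\rangle$: let $G=(V,E)$ be a finite connected undirected graph with unit-length edges and root $O\in V$, and let $\mathbf p=(p_e)_{e\in E}\in(0,1]^E$. At each stage $t\ge1$ a random set $E_t\subseteq E$ of active edges is drawn: each edge $e$ is active with probability $p_e$, independently across edges and stages. The game is zero-sum between a hider (the maximizer) and a searcher (the minimizer). - At stage $0$ the hider chooses an edge $e\in E$ and stays there forever. His mixed strategies are distributions on $E$. - The searcher starts at $v_0=O$. At each stage $t\ge1$ she has observed $E_1,\dots,E_t$ and her past positions. She then either stays at $v_{t-1}$ or traverses an active edge (an edge of $E_t$) incident to $v_{t-1}$, arriving at $v_t$. Randomized (behavior) strategies are allowed. - The payoff to the hider, against a searcher strategy $\sigma$, is $g(e,\sigma)=\mathbb E_\sigma[\inf\{t\ge1:\text{the searcher traverses } e \text{ at stage } t\}]$, with $\inf\emptyset=+\infty$. It is extended linearly to mixed strategies of the hider. *)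

theory Defs
  imports "HOL-Probability.Probability"
begin

definition graph_ok :: "'v set \<Rightarrow> 'v set set \<Rightarrow> 'v \<Rightarrow> bool" where
  "graph_ok V E r \<longleftrightarrow> finite V \<and> r \<in> V \<and>
     E \<subseteq> {{u, w} | u w. u \<in> V \<and> w \<in> V \<and> u \<noteq> w} \<and>
     (\<forall>v\<in>V. (r, v) \<in> {(u, w). {u, w} \<in> E}\<^sup>*)"

definition active_pmf :: "'v set set \<Rightarrow> ('v set \<Rightarrow> real) \<Rightarrow> 'v set set pmf" where
  "active_pmf E p = map_pmf (\<lambda>f. {e \<in> E. f e}) (Pi_pmf E False (\<lambda>e. bernoulli_pmf (p e)))"

(* A history after t stages: the list [(E_1,v_1),...,(E_t,v_t)]. *)
type_synonym 'v hist = "('v set set \<times> 'v) list"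

definition cur_pos :: "'v \<Rightarrow> 'v hist \<Rightarrow> 'v" where
  "cur_pos r h = (if h = [] then r else snd (last h))"

(* Behaviour strategy of the searcher: given past history (E_1,v_1),...,(E_{t-1},v_{t-1})
   and the current active set E_t, a distribution over the new position v_t. *)
type_synonym 'v strat = "'v hist \<Rightarrow> 'v set set \<Rightarrow> 'v pmf"

definition searcher_strategy :: "'v set set \<Rightarrow> 'v \<Rightarrow> 'v strat \<Rightarrow> bool" where
  "searcher_strategy E r \<sigma> \<longleftrightarrow>
     (\<forall>h A. A \<subseteq> E \<longrightarrow>
        set_pmf (\<sigma> h A) \<subseteq> insert (cur_pos r h) {w. {cur_pos r h, w} \<in> A})"

fun hist_pmf :: "'v set set \<Rightarrow> ('v set \<Rightarrow> real) \<Rightarrow> 'v strat \<Rightarrow> nat \<Rightarrow> 'v hist pmf" where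
  "hist_pmf E p \<sigma> 0 = return_pmf []"
| "hist_pmf E p \<sigma> (Suc t) =
     bind_pmf (hist_pmf E p \<sigma> t) (\<lambda>h.
     bind_pmf (active_pmf E p) (\<lambda>A.
     map_pmf (\<lambda>v. h @ [(A, v)]) (\<sigma> h A)))"

fun traversed :: "'v \<Rightarrow> 'v hist \<Rightarrow> 'v set set" where
  "traversed u [] = {}"
| "traversed u ((A, w) # h) = (if u = w then {} else {{u, w}}) \<union> traversed w h"

(* g(e,\<sigma>) = E[T_e] = \<Sum>_{t\<ge>0} P(T_e > t), where T_e is the first stage at which e is
   traversed (T_e = \<infinity> if never).  P(T_e > t) = P(e not traversed during stages 1..t). *)
definition payoff :: "'v set set \<Rightarrow> 'v \<Rightarrow> ('v set \<Rightarrow> real) \<Rightarrow> 'v set \<Rightarrow> 'v strat \<Rightarrow> ennreal" where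
  "payoff E r p e \<sigma> =
     (\<Sum>t. ennreal (measure_pmf.prob (hist_pmf E p \<sigma> t) {h. e \<notin> traversed r h}))"

definition mixed_payoff :: "'v set set \<Rightarrow> 'v \<Rightarrow> ('v set \<Rightarrow> real) \<Rightarrow> 'v set pmf \<Rightarrow> 'v strat \<Rightarrow> ennreal" where
  "mixed_payoff E r p x \<sigma> = (\<Sum>e\<in>E. ennreal (pmf x e) * payoff E r p e \<sigma>)"

definition hider_strategy :: "'v set set \<Rightarrow> 'v set pmf \<Rightarrow> bool" where
  "hider_strategy E x \<longleftrightarrow> set_pmf x \<subseteq> E"

end

(*
  The searcher's behaviour strategies form a convex set (Kuhn: the mixture of two behaviour
  strategies is realised by a single one, so payoffs are affine along mixtures), sequentially
  compact for pointwise convergence of move probabilities, and every payoff is lower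
  semicontinuous there, being a series of probabilities of events that depend on finitely many
  stages.  Payoffs may be infinite, but from some late stage on any strategy can be replaced by a
  walk covering all edges, crossed edge by edge whenever the next edge is active; this makes all
  payoffs finite at an arbitrarily small cost on the finite ones.  Hence the upper value v is
  finite and attained by some searcher strategy.  The real vectors dominating some payoff vector
  form a closed, convex, upward closed subset of R^E on which some coordinate is at least v;
  projecting the point (v - d, ..., v - d) onto it yields weights under which all these vectors
  average at least v - d, and letting d tend to 0 gives a hider strategy guaranteeing v.
*)

theory Submission
  imports Defs "HOL-Library.Diagonal_Subsequence"
begin

section \<open>Separation from an upward closed convex set\<close>

lemma countable_bounded_convergent_subseq:
  fixes f :: "nat \<Rightarrow> 'i \<Rightarrow> real"
  assumes countable: "countable I" and bounded: "\<And>n i. i \<in> I \<Longrightarrow> \<bar>f n i\<bar> \<le> B"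
  shows "\<exists>\<phi> l. strict_mono \<phi> \<and> (\<forall>i\<in>I. (\<lambda>n. f (\<phi> n) i) \<longlonglongrightarrow> l i)"
proof (cases "I = {}")
  case True
  then show ?thesis using strict_mono_id by (intro exI[of _ id]) blast
next
  case False
  define P where "P j s \<longleftrightarrow> convergent (\<lambda>n. f (s n) (from_nat_into I j))" for j and s :: "nat \<Rightarrow> nat"
  interpret subseqs P
  proof
    fix j and s :: "nat \<Rightarrow> nat"
    obtain r where r: "strict_mono r" "monoseq (\<lambda>n. f (s (r n)) (from_nat_into I j))"
      using seq_monosub[of "\<lambda>n. f (s n) (from_nat_into I j)"] by blast
    have "Bseq (\<lambda>n. f (s (r n)) (from_nat_into I j))"
      using bounded from_nat_into[OF False] by (intro BseqI'[of _ B]) auto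
    then show "\<exists>r. strict_mono r \<and> P j (s \<circ> r)"
      using r Bseq_monoseq_convergent unfolding P_def o_def by blast
  qed
  have "convergent (\<lambda>n. f (diagseq n) (from_nat_into I j))" for j
  proof -
    have "P j (diagseq \<circ> ((+) (Suc j)))"
      by (rule diagseq_holds) (auto simp: P_def o_def dest: convergent_subseq_convergent)
    then show ?thesis
      using convergent_ignore_initial_segment[of "\<lambda>n. f (diagseq n) (from_nat_into I j)" "Suc j"]
      by (simp add: P_def o_def add.commute)
  qed
  then have "(\<lambda>n. f (diagseq n) i) \<longlonglongrightarrow> lim (\<lambda>n. f (diagseq n) i)" if "i \<in> I" for i
    using from_nat_into_surj[OF countable that] by (metis convergent_LIMSEQ_iff)
  then show ?thesis
    using subseq_diagseq by (intro exI[of _ diagseq] exI[of _ "\<lambda>i. lim (\<lambda>n. f (diagseq n) i)"]) blast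
qed

definition sqdist_on :: "'a set \<Rightarrow> ('a \<Rightarrow> real) \<Rightarrow> ('a \<Rightarrow> real) \<Rightarrow> real" where
  "sqdist_on E y z = (\<Sum>e\<in>E. (y e - z e)\<^sup>2)"

lemma sqdist_on_nonneg: "0 \<le> sqdist_on E y z"
  unfolding sqdist_on_def by (intro sum_nonneg) auto

lemma abs_le_sqdist_on:
  assumes "finite E" "e \<in> E"
  shows "\<bar>y e\<bar> \<le> (\<Sum>e\<in>E. \<bar>z e\<bar>) + sqdist_on E y z + 1"
proof -
  have "\<bar>a\<bar> \<le> a\<^sup>2 + 1" for a :: real
    using zero_le_power2[of "\<bar>a\<bar> - 1/2"] by (simp add: power2_eq_square algebra_simps)
  moreover have "(y e - z e)\<^sup>2 \<le> sqdist_on E y z"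
    unfolding sqdist_on_def using assms by (intro member_le_sum) auto
  moreover have "\<bar>z e\<bar> \<le> (\<Sum>e\<in>E. \<bar>z e\<bar>)"
    using assms by (intro member_le_sum) auto
  ultimately show ?thesis
    by (smt (verit))
qed

locale closed_convex_upset =
  fixes E :: "'a set" and D :: "('a \<Rightarrow> real) set"
  assumes finite_E: "finite E"
    and nonempty: "D \<noteq> {}"
    and convex: "\<And>y1 y2 l. y1 \<in> D \<Longrightarrow> y2 \<in> D \<Longrightarrow> 0 \<le> l \<Longrightarrow> l \<le> 1 \<Longrightarrow>
                   (\<lambda>e. l * y1 e + (1 - l) * y2 e) \<in> D"
    and upward: "\<And>y y'. y \<in> D \<Longrightarrow> (\<forall>e\<in>E. y e \<le> y' e) \<Longrightarrow> y' \<in> D"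
    and closed: "\<And>Y y. (\<forall>k. Y k \<in> D) \<Longrightarrow> (\<forall>e\<in>E. (\<lambda>k. Y k e) \<longlonglongrightarrow> y e) \<Longrightarrow> y \<in> D"
begin

lemma nearest_point_exists: "\<exists>y\<^sub>0\<in>D. \<forall>y\<in>D. sqdist_on E y\<^sub>0 z \<le> sqdist_on E y z"
proof -
  define d where "d = Inf ((\<lambda>y. sqdist_on E y z) ` D)"
  have bdd: "bdd_below ((\<lambda>y. sqdist_on E y z) ` D)"
    using sqdist_on_nonneg by (intro bdd_belowI) auto
  have "\<exists>y\<in>D. sqdist_on E y z < d + inverse (real (Suc k))" for k
    using cInf_lessD[of "(\<lambda>y. sqdist_on E y z) ` D"] nonempty unfolding d_def by force
  then obtain Y where Y: "\<And>k. Y k \<in> D" "\<And>k. sqdist_on E (Y k) z < d + inverse (real (Suc k))"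
    by metis
  have "\<bar>Y k e\<bar> \<le> (\<Sum>e\<in>E. \<bar>z e\<bar>) + (d + 1) + 1" if "e \<in> E" for k e
  proof -
    have "inverse (real (Suc k)) \<le> 1" by (simp add: inverse_le_1_iff)
    then show ?thesis using abs_le_sqdist_on[OF finite_E that, of "Y k" z] Y(2)[of k] by linarith
  qed
  then obtain \<phi> y\<^sub>0 where \<phi>: "strict_mono \<phi>" "\<forall>e\<in>E. (\<lambda>k. Y (\<phi> k) e) \<longlonglongrightarrow> y\<^sub>0 e"
    using countable_bounded_convergent_subseq[OF countable_finite[OF finite_E]] by metis
  have "y\<^sub>0 \<in> D" using closed[of "Y \<circ> \<phi>"] Y(1) \<phi>(2) by simp
  moreover have "sqdist_on E y\<^sub>0 z \<le> d"
  proof (rule LIMSEQ_le)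
    show "(\<lambda>k. sqdist_on E (Y (\<phi> k)) z) \<longlonglongrightarrow> sqdist_on E y\<^sub>0 z"
      unfolding sqdist_on_def by (intro tendsto_sum tendsto_intros) (use \<phi>(2) in auto)
    have "(\<lambda>k. d + inverse (real (Suc k))) \<longlonglongrightarrow> d + 0"
      by (intro tendsto_intros LIMSEQ_inverse_real_of_nat)
    then show "(\<lambda>k. d + inverse (real (Suc (\<phi> k)))) \<longlonglongrightarrow> d"
      using LIMSEQ_subseq_LIMSEQ[OF _ \<phi>(1)] by (simp add: o_def)
    show "\<exists>N. \<forall>k\<ge>N. sqdist_on E (Y (\<phi> k)) z \<le> d + inverse (real (Suc (\<phi> k)))"
      using Y(2) less_imp_le by blast
  qed
  moreover have "d \<le> sqdist_on E y z" if "y \<in> D" for y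
    unfolding d_def using bdd that by (simp add: cInf_lower)
  ultimately show ?thesis by force
qed

lemma nearest_point_variational_ineq:
  assumes y\<^sub>0: "y\<^sub>0 \<in> D" "\<forall>y\<in>D. sqdist_on E y\<^sub>0 z \<le> sqdist_on E y z" and y: "y \<in> D"
  shows "0 \<le> (\<Sum>e\<in>E. (y\<^sub>0 e - z e) * (y e - y\<^sub>0 e))"
proof (rule ccontr)
  define a where "a = (\<Sum>e\<in>E. (y\<^sub>0 e - z e) * (y e - y\<^sub>0 e))"
  define b where "b = (\<Sum>e\<in>E. (y e - y\<^sub>0 e)\<^sup>2)"
  assume "\<not> 0 \<le> (\<Sum>e\<in>E. (y\<^sub>0 e - z e) * (y e - y\<^sub>0 e))"
  then have a: "a < 0" unfolding a_def by simp
  have b: "0 \<le> b" unfolding b_def by (intro sum_nonneg) auto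
  have segment: "0 \<le> 2 * t * a + t\<^sup>2 * b" if "0 \<le> t" "t \<le> 1" for t
  proof -
    have "sqdist_on E y\<^sub>0 z \<le> sqdist_on E (\<lambda>e. t * y e + (1 - t) * y\<^sub>0 e) z"
      using y\<^sub>0 convex[OF y y\<^sub>0(1) that] by blast
    also have "\<dots> = (\<Sum>e\<in>E. (y\<^sub>0 e - z e)\<^sup>2 + 2 * t * ((y\<^sub>0 e - z e) * (y e - y\<^sub>0 e))
                              + t\<^sup>2 * (y e - y\<^sub>0 e)\<^sup>2)"
      unfolding sqdist_on_def by (intro sum.cong refl) (simp add: power2_eq_square algebra_simps)
    also have "\<dots> = sqdist_on E y\<^sub>0 z + 2 * t * a + t\<^sup>2 * b"
      unfolding sqdist_on_def a_def b_def by (simp add: sum.distrib sum_distrib_left)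
    finally show ?thesis by simp
  qed
  define t where "t = min 1 (- a / (b + 1))"
  have "0 < - a / (b + 1)" using a b by (intro divide_pos_pos) auto
  then have t: "0 < t" "t \<le> 1" unfolding t_def by auto
  have "t * b \<le> - a / (b + 1) * b" using b unfolding t_def by (intro mult_right_mono) auto
  also have "\<dots> \<le> - a" using a b by (simp add: field_simps)
  finally have "t * b \<le> - a" .
  moreover have "0 \<le> t * (2 * a + t * b)"
    using segment[OF less_imp_le[OF t(1)] t(2)] by (simp add: power2_eq_square algebra_simps)
  ultimately show False using t a by (simp add: zero_le_mult_iff)
qed

lemma approx_separating_weights:
  assumes large: "\<And>y. y \<in> D \<Longrightarrow> \<exists>e\<in>E. w \<le> y e" and "\<delta> > 0"
  shows "\<exists>x. (\<forall>e\<in>E. 0 \<le> x e) \<and> sum x E = 1 \<and> (\<forall>y\<in>D. w - \<delta> \<le> (\<Sum>e\<in>E. x e * y e))"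
proof -
  define z where "z e = w - \<delta>" for e :: 'a
  obtain y\<^sub>0 where y\<^sub>0: "y\<^sub>0 \<in> D" "\<forall>y\<in>D. sqdist_on E y\<^sub>0 z \<le> sqdist_on E y z"
    using nearest_point_exists by blast
  define a where "a e = y\<^sub>0 e - z e" for e
  have ineq: "(\<Sum>e\<in>E. a e * y\<^sub>0 e) \<le> (\<Sum>e\<in>E. a e * y e)" if "y \<in> D" for y
    using nearest_point_variational_ineq[OF y\<^sub>0 that]
    by (simp add: a_def right_diff_distrib sum_subtractf)
  have a_nonneg: "0 \<le> a e" if e: "e \<in> E" for e
  proof -
    define y where "y = y\<^sub>0(e := y\<^sub>0 e + 1)"
    have "y \<in> D" unfolding y_def by (rule upward[OF y\<^sub>0(1)]) auto
    have "(\<Sum>e'\<in>E. a e' * y e') = (\<Sum>e'\<in>E. a e' * y\<^sub>0 e' + (if e' = e then a e else 0))"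
      by (intro sum.cong refl) (simp add: y_def algebra_simps)
    also have "\<dots> = (\<Sum>e'\<in>E. a e' * y\<^sub>0 e') + a e"
      using finite_E e by (simp add: sum.distrib)
    finally show ?thesis using ineq[OF \<open>y \<in> D\<close>] by simp
  qed
  obtain e\<^sub>0 where e\<^sub>0: "e\<^sub>0 \<in> E" "w \<le> y\<^sub>0 e\<^sub>0" using large[OF y\<^sub>0(1)] by blast
  define S where "S = sum a E"
  have "\<delta> \<le> a e\<^sub>0" using e\<^sub>0 unfolding a_def z_def by simp
  also have "a e\<^sub>0 \<le> S" unfolding S_def using finite_E e\<^sub>0(1) a_nonneg by (intro member_le_sum) auto
  finally have S: "S > 0" using \<open>\<delta> > 0\<close> by linarith
  show ?thesis
  proof (intro exI[of _ "\<lambda>e. a e / S"] conjI ballI)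
    show "0 \<le> a e / S" if "e \<in> E" for e using a_nonneg[OF that] S by simp
    show "(\<Sum>e\<in>E. a e / S) = 1" using S unfolding S_def by (simp add: sum_divide_distrib[symmetric])
    fix y assume y: "y \<in> D"
    have "(\<Sum>e\<in>E. a e * y\<^sub>0 e) = (\<Sum>e\<in>E. (a e)\<^sup>2 + (w - \<delta>) * a e)"
      by (intro sum.cong refl) (simp add: a_def z_def power2_eq_square algebra_simps)
    also have "\<dots> = (\<Sum>e\<in>E. (a e)\<^sup>2) + (w - \<delta>) * S"
      by (simp add: S_def sum.distrib sum_distrib_left)
    finally have "(\<Sum>e\<in>E. a e * y\<^sub>0 e) = (\<Sum>e\<in>E. (a e)\<^sup>2) + (w - \<delta>) * S" .
    moreover have "0 \<le> (\<Sum>e\<in>E. (a e)\<^sup>2)" by (intro sum_nonneg) auto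
    ultimately have "(w - \<delta>) * S \<le> (\<Sum>e\<in>E. a e * y e)" using ineq[OF y] by linarith
    then show "w - \<delta> \<le> (\<Sum>e\<in>E. a e / S * y e)"
      using S by (simp add: pos_le_divide_eq sum_divide_distrib[symmetric])
  qed
qed

lemma separating_weights:
  assumes large: "\<And>y. y \<in> D \<Longrightarrow> \<exists>e\<in>E. w \<le> y e"
  shows "\<exists>x. (\<forall>e\<in>E. 0 \<le> x e) \<and> sum x E = 1 \<and> (\<forall>y\<in>D. w \<le> (\<Sum>e\<in>E. x e * y e))"
proof -
  have "\<exists>x. (\<forall>e\<in>E. 0 \<le> x e) \<and> sum x E = 1 \<and>
          (\<forall>y\<in>D. w - inverse (real (Suc k)) \<le> (\<Sum>e\<in>E. x e * y e))" for k
    by (rule approx_separating_weights[OF large]) auto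
  then obtain X where X: "\<And>k e. e \<in> E \<Longrightarrow> 0 \<le> X k e" "\<And>k. sum (X k) E = 1"
      "\<And>k y. y \<in> D \<Longrightarrow> w - inverse (real (Suc k)) \<le> (\<Sum>e\<in>E. X k e * y e)"
    by metis
  have "\<bar>X k e\<bar> \<le> 1" if "e \<in> E" for k e
    using X(1)[OF that] X(2)[of k] member_le_sum[of e E "X k"] finite_E that X(1) by auto
  then obtain \<phi> x where \<phi>: "strict_mono \<phi>" "\<forall>e\<in>E. (\<lambda>k. X (\<phi> k) e) \<longlonglongrightarrow> x e"
    using countable_bounded_convergent_subseq[OF countable_finite[OF finite_E]] by metis
  show ?thesis
  proof (intro exI[of _ x] conjI ballI)
    show "0 \<le> x e" if "e \<in> E" for e
      using LIMSEQ_le_const[OF \<phi>(2)[rule_format, OF that]] X(1)[OF that] by blast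
    have "(\<lambda>k. sum (X (\<phi> k)) E) \<longlonglongrightarrow> sum x E" by (intro tendsto_sum) (use \<phi>(2) in auto)
    then show "sum x E = 1" using X(2) by (simp add: LIMSEQ_const_iff)
    fix y assume y: "y \<in> D"
    have "(\<lambda>k. w - inverse (real (Suc k))) \<longlonglongrightarrow> w - 0"
      by (intro tendsto_intros LIMSEQ_inverse_real_of_nat)
    then have "(\<lambda>k. w - inverse (real (Suc (\<phi> k)))) \<longlonglongrightarrow> w"
      using LIMSEQ_subseq_LIMSEQ[OF _ \<phi>(1)] by (simp add: o_def)
    moreover have "(\<lambda>k. \<Sum>e\<in>E. X (\<phi> k) e * y e) \<longlonglongrightarrow> (\<Sum>e\<in>E. x e * y e)"
      by (intro tendsto_sum tendsto_intros) (use \<phi>(2) in auto)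
    ultimately show "w \<le> (\<Sum>e\<in>E. x e * y e)"
      using X(3)[OF y] by (blast intro: LIMSEQ_le)
  qed
qed

end

section \<open>A minimax theorem for payoffs in \<open>ennreal\<close>\<close>

lemma pmf_of_weights_exists:
  assumes "finite E" "\<forall>e\<in>E. 0 \<le> w e" "sum w E = 1"
  shows "\<exists>x. set_pmf x \<subseteq> E \<and> (\<forall>e\<in>E. pmf x e = w e)"
proof -
  define f where "f e = (if e \<in> E then w e else 0)" for e
  have f_nonneg: "0 \<le> f e" for e using assms(2) unfolding f_def by simp
  have "(\<integral>\<^sup>+e. ennreal (f e) \<partial>count_space UNIV) = (\<Sum>e\<in>E. ennreal (f e))"
    using assms(1) by (intro nn_integral_count_space') (auto simp: f_def)
  also have "\<dots> = 1" using assms f_nonneg by (simp add: f_def sum_ennreal)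
  finally have f_sum: "(\<integral>\<^sup>+e. ennreal (f e) \<partial>count_space UNIV) = 1" .
  have "pmf (embed_pmf f) e = f e" for e by (rule pmf_embed_pmf[OF f_nonneg f_sum])
  moreover have "set_pmf (embed_pmf f) \<subseteq> E"
    unfolding set_embed_pmf[OF f_nonneg f_sum] by (auto simp: f_def)
  ultimately show ?thesis by (intro exI[of _ "embed_pmf f"]) (simp add: f_def)
qed

lemma pmf_weighted_sum_le:
  fixes f :: "'e \<Rightarrow> ennreal"
  assumes "finite E" "set_pmf x \<subseteq> E" "\<And>e. e \<in> E \<Longrightarrow> f e \<le> c"
  shows "(\<Sum>e\<in>E. ennreal (pmf x e) * f e) \<le> c"
proof -
  have "(\<Sum>e\<in>E. ennreal (pmf x e) * f e) \<le> (\<Sum>e\<in>E. ennreal (pmf x e) * c)"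
    using assms(3) by (intro sum_mono mult_left_mono) auto
  also have "\<dots> = ennreal (\<Sum>e\<in>E. pmf x e) * c"
    by (simp add: sum_distrib_right[symmetric] sum_ennreal)
  also have "(\<Sum>e\<in>E. pmf x e) = 1" using assms(1,2) by (rule sum_pmf_eq_1)
  finally show ?thesis by simp
qed

text \<open>
  Assumption \<open>compact\<close> combines sequential compactness of \<open>S\<close> with lower semicontinuity of
  the payoffs; \<open>finite_approx\<close> says that strategies with only finite payoffs are dense.
\<close>

locale minimax_game =
  fixes E :: "'e set" and S :: "'s set" and g :: "'e \<Rightarrow> 's \<Rightarrow> ennreal"
  assumes finite_E: "finite E" and E_nonempty: "E \<noteq> {}" and S_nonempty: "S \<noteq> {}"
    and mixture: "\<And>s\<^sub>1 s\<^sub>2 l. s\<^sub>1 \<in> S \<Longrightarrow> s\<^sub>2 \<in> S \<Longrightarrow> 0 \<le> l \<Longrightarrow> l \<le> 1 \<Longrightarrow>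
        \<exists>s\<in>S. \<forall>e\<in>E. g e s = ennreal l * g e s\<^sub>1 + ennreal (1 - l) * g e s\<^sub>2"
    and compact: "\<And>ss. (\<forall>n. ss n \<in> S) \<Longrightarrow>
        \<exists>s\<in>S. \<forall>e\<in>E. \<forall>b B. (\<forall>n. g e (ss n) \<le> b n) \<longrightarrow> b \<longlonglongrightarrow> B \<longrightarrow> g e s \<le> B"
    and finite_approx: "\<And>s \<epsilon>. s \<in> S \<Longrightarrow> \<epsilon> > 0 \<Longrightarrow>
        \<exists>s'\<in>S. (\<forall>e\<in>E. g e s' < \<top>) \<and> (\<forall>e\<in>E. g e s < \<top> \<longrightarrow> g e s' \<le> g e s + ennreal \<epsilon>)"
begin

definition max_payoff :: "'s \<Rightarrow> ennreal" where
  "max_payoff s = Max ((\<lambda>e. g e s) ` E)"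

definition upper_value :: ennreal where
  "upper_value = (INF s\<in>S. max_payoff s)"

lemma payoff_le_max_payoff: "e \<in> E \<Longrightarrow> g e s \<le> max_payoff s"
  unfolding max_payoff_def using finite_E by (intro Max_ge) auto

lemma max_payoff_attained: "\<exists>e\<in>E. max_payoff s = g e s"
proof -
  have "max_payoff s \<in> (\<lambda>e. g e s) ` E"
    unfolding max_payoff_def using finite_E E_nonempty by (intro Max_in) auto
  then show ?thesis by blast
qed

lemma upper_value_le: "s \<in> S \<Longrightarrow> upper_value \<le> max_payoff s"
  unfolding upper_value_def by (rule INF_lower)

lemma upper_value_attained: "\<exists>s\<^sub>0\<in>S. \<forall>e\<in>E. g e s\<^sub>0 \<le> upper_value"
proof -
  obtain u where u: "\<And>n. u n \<in> max_payoff ` S" "u \<longlonglongrightarrow> upper_value"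
    using Inf_as_limit[of "max_payoff ` S"] S_nonempty unfolding upper_value_def by auto
  then have "\<forall>n. \<exists>s\<in>S. u n = max_payoff s" by blast
  then obtain ss where ss: "\<And>n. ss n \<in> S" "\<And>n. u n = max_payoff (ss n)"
    by metis
  obtain s\<^sub>0 where "s\<^sub>0 \<in> S" "\<forall>e\<in>E. \<forall>b B. (\<forall>n. g e (ss n) \<le> b n) \<longrightarrow> b \<longlonglongrightarrow> B \<longrightarrow> g e s\<^sub>0 \<le> B"
    using compact[of ss] ss(1) by blast
  moreover have "g e (ss n) \<le> u n" if "e \<in> E" for e n
    using payoff_le_max_payoff[OF that] ss(2) by simp
  ultimately show ?thesis using u(2) by blast
qed

lemma upper_value_finite: "upper_value < \<top>"
proof -
  obtain s where "s \<in> S" using S_nonempty by blast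
  then obtain s' where s': "s' \<in> S" "\<forall>e\<in>E. g e s' < \<top>"
    using finite_approx[of s 1] by auto
  obtain e where "e \<in> E" "max_payoff s' = g e s'" using max_payoff_attained by blast
  then show ?thesis using upper_value_le[OF s'(1)] s'(2) by (simp add: le_less_trans)
qed

definition dominated :: "('e \<Rightarrow> real) set" where
  "dominated = {y. (\<forall>e\<in>E. 0 \<le> y e) \<and> (\<exists>s\<in>S. \<forall>e\<in>E. g e s \<le> ennreal (y e))}"

lemma dominated_convex:
  assumes "y\<^sub>1 \<in> dominated" "y\<^sub>2 \<in> dominated" "0 \<le> l" "l \<le> 1"
  shows "(\<lambda>e. l * y\<^sub>1 e + (1 - l) * y\<^sub>2 e) \<in> dominated"
proof -
  obtain s\<^sub>1 s\<^sub>2 where s: "s\<^sub>1 \<in> S" "s\<^sub>2 \<in> S"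
      "\<forall>e\<in>E. g e s\<^sub>1 \<le> ennreal (y\<^sub>1 e)" "\<forall>e\<in>E. g e s\<^sub>2 \<le> ennreal (y\<^sub>2 e)"
    and y: "\<forall>e\<in>E. 0 \<le> y\<^sub>1 e" "\<forall>e\<in>E. 0 \<le> y\<^sub>2 e"
    using assms(1,2) unfolding dominated_def by blast
  obtain s where s_mix: "s \<in> S" "\<forall>e\<in>E. g e s = ennreal l * g e s\<^sub>1 + ennreal (1 - l) * g e s\<^sub>2"
    using mixture[OF s(1,2) assms(3,4)] by blast
  have "g e s \<le> ennreal (l * y\<^sub>1 e + (1 - l) * y\<^sub>2 e)" if e: "e \<in> E" for e
  proof -
    have "g e s \<le> ennreal l * ennreal (y\<^sub>1 e) + ennreal (1 - l) * ennreal (y\<^sub>2 e)"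
      unfolding s_mix(2)[rule_format, OF e] using s e by (intro add_mono mult_left_mono) auto
    also have "\<dots> = ennreal (l * y\<^sub>1 e + (1 - l) * y\<^sub>2 e)"
      using assms(3,4) y e by (simp add: ennreal_mult ennreal_plus)
    finally show ?thesis .
  qed
  then show ?thesis unfolding dominated_def using s_mix(1) y assms(3,4) by auto
qed

lemma dominated_closed:
  assumes Y: "\<forall>k. Y k \<in> dominated" and lim: "\<forall>e\<in>E. (\<lambda>k. Y k e) \<longlonglongrightarrow> y e"
  shows "y \<in> dominated"
proof -
  have "\<forall>k. \<exists>s\<in>S. \<forall>e\<in>E. g e s \<le> ennreal (Y k e)" using Y unfolding dominated_def by blast
  then obtain ss where ss: "\<And>k. ss k \<in> S" "\<And>k e. e \<in> E \<Longrightarrow> g e (ss k) \<le> ennreal (Y k e)"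
    by metis
  obtain s where s: "s \<in> S" "\<forall>e\<in>E. \<forall>b B. (\<forall>n. g e (ss n) \<le> b n) \<longrightarrow> b \<longlonglongrightarrow> B \<longrightarrow> g e s \<le> B"
    using compact[of ss] ss(1) by blast
  have "0 \<le> y e" if "e \<in> E" for e
    using LIMSEQ_le_const[OF lim[rule_format, OF that]] Y that unfolding dominated_def by blast
  moreover have "g e s \<le> ennreal (y e)" if e: "e \<in> E" for e
  proof -
    have "(\<lambda>k. ennreal (Y k e)) \<longlonglongrightarrow> ennreal (y e)" using lim e by (intro tendsto_ennrealI) auto
    then show ?thesis using s(2)[rule_format, OF e, of "\<lambda>k. ennreal (Y k e)"] ss(2)[OF e] by simp
  qed
  ultimately show ?thesis unfolding dominated_def using s(1) by blast
qed

lemma dominated_nonempty: "dominated \<noteq> {}"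
proof -
  obtain s where "s \<in> S" using S_nonempty by blast
  then obtain s' where s': "s' \<in> S" "\<forall>e\<in>E. g e s' < \<top>"
    using finite_approx[of s 1] by auto
  then have "(\<lambda>e. enn2real (g e s')) \<in> dominated" unfolding dominated_def by auto
  then show ?thesis by blast
qed

lemma dominated_upward:
  assumes "y \<in> dominated" "\<forall>e\<in>E. y e \<le> y' e"
  shows "y' \<in> dominated"
proof -
  obtain s where s: "s \<in> S" "\<forall>e\<in>E. g e s \<le> ennreal (y e)" "\<forall>e\<in>E. 0 \<le> y e"
    using assms(1) unfolding dominated_def by blast
  have "g e s \<le> ennreal (y' e)" if "e \<in> E" for e
    using s(2) assms(2) that by (meson ennreal_leI order_trans)
  moreover have "0 \<le> y' e" if "e \<in> E" for e
    using s(3) assms(2) that by (meson order_trans)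
  ultimately show ?thesis unfolding dominated_def using s(1) by blast
qed

lemma closed_convex_upset_dominated: "closed_convex_upset E dominated"
  using finite_E dominated_nonempty dominated_convex dominated_upward dominated_closed
  by unfold_locales blast+

lemma dominated_large:
  assumes "y \<in> dominated"
  shows "\<exists>e\<in>E. enn2real upper_value \<le> y e"
proof -
  obtain s where s: "s \<in> S" "\<forall>e\<in>E. g e s \<le> ennreal (y e)"
    using assms unfolding dominated_def by blast
  obtain e where e: "e \<in> E" "max_payoff s = g e s" using max_payoff_attained by blast
  have "upper_value \<le> ennreal (y e)" using upper_value_le[OF s(1)] e s(2) by (metis order_trans)
  then have "enn2real upper_value \<le> y e"
    using assms e(1) unfolding dominated_def by (simp add: enn2real_leI)
  then show ?thesis using e(1) by blast
qed

lemma hider_guarantee_finite: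
  assumes w: "\<forall>e\<in>E. 0 \<le> w e" "\<forall>y\<in>dominated. enn2real upper_value \<le> (\<Sum>e\<in>E. w e * y e)"
    and s: "s \<in> S" "\<forall>e\<in>E. g e s < \<top>"
  shows "upper_value \<le> (\<Sum>e\<in>E. ennreal (w e) * g e s)"
proof -
  have "(\<lambda>e. enn2real (g e s)) \<in> dominated" unfolding dominated_def using s by auto
  then have "upper_value \<le> ennreal (\<Sum>e\<in>E. w e * enn2real (g e s))"
    using w(2) upper_value_finite by (simp add: enn2real_le less_top)
  also have "\<dots> = (\<Sum>e\<in>E. ennreal (w e * enn2real (g e s)))"
    by (rule sum_ennreal[symmetric]) (use w(1) in auto)
  also have "\<dots> = (\<Sum>e\<in>E. ennreal (w e) * g e s)"
    using w(1) s(2) by (intro sum.cong refl) (simp add: ennreal_mult less_top)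
  finally show ?thesis .
qed

text \<open>
  By \<open>finite_approx\<close> it suffices to consider searcher strategies with finite payoffs, whose
  payoff vectors lie in \<open>dominated\<close>.
\<close>

lemma hider_guarantee:
  obtains x where "set_pmf x \<subseteq> E" "\<And>s. s \<in> S \<Longrightarrow> upper_value \<le> (\<Sum>e\<in>E. ennreal (pmf x e) * g e s)"
proof -
  interpret closed_convex_upset E dominated by (rule closed_convex_upset_dominated)
  obtain w where w: "\<forall>e\<in>E. 0 \<le> w e" "sum w E = 1"
    "\<forall>y\<in>dominated. enn2real upper_value \<le> (\<Sum>e\<in>E. w e * y e)"
    using separating_weights dominated_large by blast
  obtain x where x: "set_pmf x \<subseteq> E" "\<forall>e\<in>E. pmf x e = w e"
    using pmf_of_weights_exists[OF finite_E w(1,2)] by blast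
  have guarantee: "upper_value \<le> (\<Sum>e\<in>E. ennreal (pmf x e) * g e s)" if s: "s \<in> S" for s
  proof (rule ennreal_le_epsilon)
    fix \<epsilon> :: real
    assume finite_sum: "(\<Sum>e\<in>E. ennreal (pmf x e) * g e s) < \<top>" and "0 < \<epsilon>"
    obtain s' where s': "s' \<in> S" "\<forall>e\<in>E. g e s' < \<top>" "\<forall>e\<in>E. g e s < \<top> \<longrightarrow> g e s' \<le> g e s + ennreal \<epsilon>"
      using finite_approx[OF s \<open>0 < \<epsilon>\<close>] by blast
    have "ennreal (pmf x e) * g e s' \<le> ennreal (pmf x e) * (g e s + ennreal \<epsilon>)" if e: "e \<in> E" for e
    proof (cases "pmf x e = 0")
      case False
      have "ennreal (pmf x e) * g e s \<le> (\<Sum>e\<in>E. ennreal (pmf x e) * g e s)"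
        using finite_E e by (intro member_le_sum) auto
      then have "ennreal (pmf x e) * g e s < \<top>" using finite_sum by (rule le_less_trans)
      then have "g e s < \<top>" using False by (auto simp: ennreal_mult_less_top)
      then show ?thesis using s'(3) e by (intro mult_left_mono) auto
    qed simp
    then have "upper_value \<le> (\<Sum>e\<in>E. ennreal (pmf x e) * (g e s + ennreal \<epsilon>))"
      using hider_guarantee_finite[OF w(1,3) s'(1,2)] x(2) by (simp add: order_trans[OF _ sum_mono])
    also have "\<dots> = (\<Sum>e\<in>E. ennreal (pmf x e) * g e s) + (\<Sum>e\<in>E. ennreal (pmf x e)) * ennreal \<epsilon>"
      by (simp only: distrib_left sum.distrib sum_distrib_right)
    also have "(\<Sum>e\<in>E. ennreal (pmf x e)) = 1"
      using sum_pmf_eq_1[OF finite_E x(1)] by simp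
    finally show "upper_value \<le> (\<Sum>e\<in>E. ennreal (pmf x e) * g e s) + ennreal \<epsilon>" by simp
  qed
  from x(1) guarantee show ?thesis by (rule that)
qed

theorem saddle_point:
  "\<exists>x s\<^sub>0. set_pmf x \<subseteq> E \<and> s\<^sub>0 \<in> S \<and>
     (\<forall>y. set_pmf y \<subseteq> E \<longrightarrow> (\<Sum>e\<in>E. ennreal (pmf y e) * g e s\<^sub>0) \<le> (\<Sum>e\<in>E. ennreal (pmf x e) * g e s\<^sub>0)) \<and>
     (\<forall>s\<in>S. (\<Sum>e\<in>E. ennreal (pmf x e) * g e s\<^sub>0) \<le> (\<Sum>e\<in>E. ennreal (pmf x e) * g e s))"
proof -
  obtain x where x: "set_pmf x \<subseteq> E" "\<And>s. s \<in> S \<Longrightarrow> upper_value \<le> (\<Sum>e\<in>E. ennreal (pmf x e) * g e s)"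
    by (rule hider_guarantee) blast
  obtain s\<^sub>0 where s\<^sub>0: "s\<^sub>0 \<in> S" "\<And>e. e \<in> E \<Longrightarrow> g e s\<^sub>0 \<le> upper_value"
    using upper_value_attained by blast
  have "(\<Sum>e\<in>E. ennreal (pmf y e) * g e s\<^sub>0) \<le> upper_value" if "set_pmf y \<subseteq> E" for y
    using pmf_weighted_sum_le[OF finite_E that s\<^sub>0(2)] .
  then show ?thesis
    using x s\<^sub>0(1) by (blast intro: order_trans)
qed

end

section \<open>Histories of the search game\<close>

lemma graph_ok_finite:
  assumes "graph_ok V E r"
  shows "finite V" "finite E" "r \<in> V"
proof -
  show "finite V" "r \<in> V" using assms unfolding graph_ok_def by auto
  have "E \<subseteq> Pow V" using assms unfolding graph_ok_def by auto
  then show "finite E" using \<open>finite V\<close> finite_subset by blast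
qed

lemma graph_ok_edge:
  assumes "graph_ok V E r" "{u, w} \<in> E"
  shows "u \<in> V" "w \<in> V" "u \<noteq> w"
proof -
  obtain a b where "{u, w} = {a, b}" "a \<in> V" "b \<in> V" "a \<noteq> b"
    using assms unfolding graph_ok_def by blast
  then show "u \<in> V" "w \<in> V" "u \<noteq> w" by (auto simp: doubleton_eq_iff)
qed

lemma cur_pos_Nil [simp]: "cur_pos u [] = u"
  by (simp add: cur_pos_def)

lemma cur_pos_Cons [simp]: "cur_pos u ((A, w) # h) = cur_pos w h"
  by (simp add: cur_pos_def)

lemma cur_pos_snoc [simp]: "cur_pos u (h @ [(A, v)]) = v"
  by (simp add: cur_pos_def)

lemma cur_pos_append: "cur_pos u (h\<^sub>1 @ h\<^sub>2) = cur_pos (cur_pos u h\<^sub>1) h\<^sub>2"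
  by (induction h\<^sub>1 arbitrary: u) auto

lemma traversed_append: "traversed u (h\<^sub>1 @ h\<^sub>2) = traversed u h\<^sub>1 \<union> traversed (cur_pos u h\<^sub>1) h\<^sub>2"
  by (induction h\<^sub>1 arbitrary: u) auto

lemma cur_pos_in: "r \<in> V \<Longrightarrow> set h \<subseteq> Pow E \<times> V \<Longrightarrow> cur_pos r h \<in> V"
  unfolding cur_pos_def by (cases h rule: rev_cases) auto

lemma set_active_pmf: "set_pmf (active_pmf E p) \<subseteq> Pow E"
  unfolding active_pmf_def by auto

lemma searcher_step_in:
  assumes "graph_ok V E r" "searcher_strategy E r \<sigma>" "set h \<subseteq> Pow E \<times> V" "A \<subseteq> E"
    and "v \<in> set_pmf (\<sigma> h A)"
  shows "v \<in> V"
proof -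
  have "v \<in> insert (cur_pos r h) {w. {cur_pos r h, w} \<in> A}"
    using assms(2,4,5) unfolding searcher_strategy_def by blast
  then show ?thesis
    using cur_pos_in[OF graph_ok_finite(3)[OF assms(1)] assms(3)] graph_ok_edge[OF assms(1)] assms(4)
    by blast
qed

lemma stay_strategy: "searcher_strategy E r (\<lambda>h A. return_pmf (cur_pos r h))"
  unfolding searcher_strategy_def by simp

declare hist_pmf.simps(2) [simp del]

lemma set_hist_pmf_length: "h \<in> set_pmf (hist_pmf E p \<sigma> t) \<Longrightarrow> length h = t"
  by (induction t arbitrary: h) (auto simp: hist_pmf.simps)

lemma pmf_hist_pmf_Suc_Nil: "pmf (hist_pmf E p \<sigma> (Suc t)) [] = 0"
  by (auto simp: pmf_eq_0_set_pmf hist_pmf.simps)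

lemma pmf_hist_pmf_snoc:
  "pmf (hist_pmf E p \<sigma> (Suc t)) (h @ [(A, v)]) =
     pmf (hist_pmf E p \<sigma> t) h * pmf (active_pmf E p) A * pmf (\<sigma> h A) v"
proof -
  have step: "pmf (bind_pmf (active_pmf E p) (\<lambda>A'. map_pmf (\<lambda>v'. h' @ [(A', v')]) (\<sigma> h' A'))) (h @ [(A, v)])
      = indicator {h} h' * (pmf (active_pmf E p) A * pmf (\<sigma> h A) v)" for h'
  proof -
    have "pmf (map_pmf (\<lambda>v'. h' @ [(A', v')]) (\<sigma> h' A')) (h @ [(A, v)]) =
        indicator {h} h' * (indicator {A} A' * pmf (\<sigma> h A) v)" for A'
    proof (cases "h' = h \<and> A' = A")
      case True
      have "inj (\<lambda>v'. h @ [(A, v')])" by (auto simp: inj_def)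
      from pmf_map_inj'[OF this] show ?thesis using True by simp
    next
      case False
      then have "h @ [(A, v)] \<notin> (\<lambda>v'. h' @ [(A', v')]) ` set_pmf (\<sigma> h' A')" by auto
      then show ?thesis using False by (auto simp: pmf_map_outside indicator_def)
    qed
    then show ?thesis by (simp add: pmf_bind measure_pmf_single)
  qed
  have "pmf (hist_pmf E p \<sigma> (Suc t)) (h @ [(A, v)]) = (\<integral>h'. pmf (bind_pmf (active_pmf E p)
      (\<lambda>A'. map_pmf (\<lambda>v'. h' @ [(A', v')]) (\<sigma> h' A'))) (h @ [(A, v)]) \<partial>hist_pmf E p \<sigma> t)"
    unfolding hist_pmf.simps(2) by (rule pmf_bind)
  also have "\<dots> = (\<integral>h'. indicator {h} h' * (pmf (active_pmf E p) A * pmf (\<sigma> h A) v) \<partial>hist_pmf E p \<sigma> t)"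
    by (simp only: step)
  finally show ?thesis by (simp add: measure_pmf_single mult.assoc)
qed

definition unfound_prob :: "'v set set \<Rightarrow> 'v \<Rightarrow> ('v set \<Rightarrow> real) \<Rightarrow> 'v set \<Rightarrow> 'v strat \<Rightarrow> nat \<Rightarrow> real" where
  "unfound_prob E r p e \<sigma> t = measure_pmf.prob (hist_pmf E p \<sigma> t) {h. e \<notin> traversed r h}"

lemma payoff_eq_suminf: "payoff E r p e \<sigma> = (\<Sum>t. ennreal (unfound_prob E r p e \<sigma> t))"
  unfolding payoff_def unfound_prob_def ..

lemma unfound_prob_nonneg: "0 \<le> unfound_prob E r p e \<sigma> t"
  unfolding unfound_prob_def by simp

definition histories :: "'v set \<Rightarrow> 'v set set \<Rightarrow> nat \<Rightarrow> 'v hist set" where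
  "histories V E t = {h. set h \<subseteq> Pow E \<times> V \<and> length h = t}"

lemma finite_histories: "finite E \<Longrightarrow> finite V \<Longrightarrow> finite (histories V E t)"
  unfolding histories_def by (intro finite_lists_length_eq) auto

lemma set_hist_pmf_histories:
  assumes "graph_ok V E r" "searcher_strategy E r \<sigma>"
  shows "set_pmf (hist_pmf E p \<sigma> t) \<subseteq> histories V E t"
proof (induction t)
  case 0
  then show ?case by (simp add: histories_def)
next
  case (Suc t)
  show ?case
  proof
    fix h assume "h \<in> set_pmf (hist_pmf E p \<sigma> (Suc t))"
    then obtain h' A v where h': "h' \<in> set_pmf (hist_pmf E p \<sigma> t)" and A: "A \<in> set_pmf (active_pmf E p)"
      and v: "v \<in> set_pmf (\<sigma> h' A)" and h: "h = h' @ [(A, v)]"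
      by (auto simp: hist_pmf.simps)
    have h'_hist: "set h' \<subseteq> Pow E \<times> V" "length h' = t" using Suc h' by (auto simp: histories_def)
    moreover have "A \<subseteq> E" using set_active_pmf A by blast
    moreover note searcher_step_in[OF assms h'_hist(1) \<open>A \<subseteq> E\<close> v]
    ultimately show "h \<in> histories V E (Suc t)" using h by (auto simp: histories_def)
  qed
qed

section \<open>Mixing behaviour strategies\<close>

definition mix_pmf :: "real \<Rightarrow> 'a pmf \<Rightarrow> 'a pmf \<Rightarrow> 'a pmf" where
  "mix_pmf a P Q = bind_pmf (bernoulli_pmf a) (\<lambda>b. if b then P else Q)"

lemma pmf_mix_pmf: "0 \<le> a \<Longrightarrow> a \<le> 1 \<Longrightarrow> pmf (mix_pmf a P Q) x = a * pmf P x + (1 - a) * pmf Q x"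
  unfolding mix_pmf_def by (simp add: pmf_bind)

lemma set_mix_pmf: "set_pmf (mix_pmf a P Q) \<subseteq> set_pmf P \<union> set_pmf Q"
  unfolding mix_pmf_def by (auto split: if_splits)

lemma prob_mix_pmf:
  assumes "0 \<le> a" "a \<le> 1"
  shows "measure_pmf.prob (mix_pmf a P Q) S = a * measure_pmf.prob P S + (1 - a) * measure_pmf.prob Q S"
proof -
  have "ennreal (measure_pmf.prob (mix_pmf a P Q) S) =
      ennreal (a * measure_pmf.prob P S + (1 - a) * measure_pmf.prob Q S)"
    using assms by (simp add: mix_pmf_def measure_pmf.emeasure_eq_measure[symmetric]
        nn_integral_bernoulli_pmf ennreal_mult ennreal_plus mult.commute)
  moreover have "0 \<le> a * measure_pmf.prob P S + (1 - a) * measure_pmf.prob Q S" using assms by simp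
  ultimately show ?thesis by simp
qed

text \<open>The weight chosen for \<open>a = b = 0\<close> is irrelevant.\<close>

definition mix_pmf_odds :: "real \<Rightarrow> real \<Rightarrow> 'a pmf \<Rightarrow> 'a pmf \<Rightarrow> 'a pmf" where
  "mix_pmf_odds a b P Q = mix_pmf (if a + b = 0 then 1 else a / (a + b)) P Q"

lemma pmf_mix_pmf_odds:
  assumes "0 \<le> a" "0 \<le> b"
  shows "(a + b) * pmf (mix_pmf_odds a b P Q) x = a * pmf P x + b * pmf Q x"
proof (cases "a + b = 0")
  case True
  then show ?thesis using assms by (simp add: add_nonneg_eq_0_iff)
next
  case False
  then have "0 < a + b" using assms by simp
  define \<alpha> where "\<alpha> = a / (a + b)"
  have \<alpha>: "0 \<le> \<alpha>" "\<alpha> \<le> 1" "(a + b) * \<alpha> = a" "(a + b) * (1 - \<alpha>) = b"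
    unfolding \<alpha>_def using assms \<open>0 < a + b\<close> by (simp_all add: field_simps)
  have "(a + b) * pmf (mix_pmf_odds a b P Q) x = ((a + b) * \<alpha>) * pmf P x + ((a + b) * (1 - \<alpha>)) * pmf Q x"
    using False by (simp add: mix_pmf_odds_def pmf_mix_pmf[OF \<alpha>(1,2)] \<alpha>_def[symmetric] algebra_simps)
  then show ?thesis by (simp only: \<alpha>(3,4))
qed

text \<open>
  Kuhn's construction: after history \<open>h\<close>, play \<open>\<sigma>\<^sub>1\<close> with the posterior probability,
  given \<open>h\<close>, that a coin of bias \<open>l\<close> selected \<open>\<sigma>\<^sub>1\<close> rather than \<open>\<sigma>\<^sub>2\<close>.
\<close>

definition mix_strategy :: "'v set set \<Rightarrow> ('v set \<Rightarrow> real) \<Rightarrow> real \<Rightarrow> 'v strat \<Rightarrow> 'v strat \<Rightarrow> 'v strat" where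
  "mix_strategy E p l \<sigma>\<^sub>1 \<sigma>\<^sub>2 h A =
     mix_pmf_odds (l * pmf (hist_pmf E p \<sigma>\<^sub>1 (length h)) h)
       ((1 - l) * pmf (hist_pmf E p \<sigma>\<^sub>2 (length h)) h) (\<sigma>\<^sub>1 h A) (\<sigma>\<^sub>2 h A)"

lemma pmf_hist_pmf_mix_strategy:
  assumes "0 \<le> l" "l \<le> 1"
  shows "pmf (hist_pmf E p (mix_strategy E p l \<sigma>\<^sub>1 \<sigma>\<^sub>2) t) h =
           l * pmf (hist_pmf E p \<sigma>\<^sub>1 t) h + (1 - l) * pmf (hist_pmf E p \<sigma>\<^sub>2 t) h"
proof (induction t arbitrary: h)
  case 0
  then show ?case by (simp add: algebra_simps)
next
  case (Suc t)
  show ?case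
  proof (cases h rule: rev_cases)
    case Nil
    then show ?thesis by (simp add: pmf_hist_pmf_Suc_Nil)
  next
    case (snoc h' x)
    obtain A v where x: "x = (A, v)" by (cases x)
    define a where "a = l * pmf (hist_pmf E p \<sigma>\<^sub>1 t) h'"
    define b where "b = (1 - l) * pmf (hist_pmf E p \<sigma>\<^sub>2 t) h'"
    have ab: "0 \<le> a" "0 \<le> b" using assms by (simp_all add: a_def b_def)
    show ?thesis
    proof (cases "length h' = t")
      case True
      then have "mix_strategy E p l \<sigma>\<^sub>1 \<sigma>\<^sub>2 h' A = mix_pmf_odds a b (\<sigma>\<^sub>1 h' A) (\<sigma>\<^sub>2 h' A)"
        by (simp add: mix_strategy_def a_def b_def)
      then have "pmf (hist_pmf E p (mix_strategy E p l \<sigma>\<^sub>1 \<sigma>\<^sub>2) (Suc t)) h =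
          (a + b) * pmf (active_pmf E p) A * pmf (mix_pmf_odds a b (\<sigma>\<^sub>1 h' A) (\<sigma>\<^sub>2 h' A)) v"
        using Suc.IH[of h'] by (simp add: snoc x pmf_hist_pmf_snoc a_def b_def)
      also have "\<dots> = pmf (active_pmf E p) A * ((a + b) * pmf (mix_pmf_odds a b (\<sigma>\<^sub>1 h' A) (\<sigma>\<^sub>2 h' A)) v)"
        by (simp only: mult_ac)
      also have "\<dots> = pmf (active_pmf E p) A * (a * pmf (\<sigma>\<^sub>1 h' A) v + b * pmf (\<sigma>\<^sub>2 h' A) v)"
        by (simp only: pmf_mix_pmf_odds[OF ab])
      finally show ?thesis by (simp add: snoc x pmf_hist_pmf_snoc a_def b_def algebra_simps)
    next
      case False
      then have "pmf (hist_pmf E p \<sigma> t) h' = 0" for \<sigma>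
        by (meson pmf_eq_0_set_pmf set_hist_pmf_length)
      then show ?thesis by (simp add: snoc x pmf_hist_pmf_snoc)
    qed
  qed
qed

lemma hist_pmf_mix_strategy:
  assumes "0 \<le> l" "l \<le> 1"
  shows "hist_pmf E p (mix_strategy E p l \<sigma>\<^sub>1 \<sigma>\<^sub>2) t =
           mix_pmf l (hist_pmf E p \<sigma>\<^sub>1 t) (hist_pmf E p \<sigma>\<^sub>2 t)"
  by (rule pmf_eqI) (simp add: pmf_hist_pmf_mix_strategy[OF assms] pmf_mix_pmf[OF assms])

lemma searcher_strategy_mix_strategy:
  assumes "searcher_strategy E r \<sigma>\<^sub>1" "searcher_strategy E r \<sigma>\<^sub>2"
  shows "searcher_strategy E r (mix_strategy E p l \<sigma>\<^sub>1 \<sigma>\<^sub>2)"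
  unfolding searcher_strategy_def
proof (intro allI impI)
  fix h A assume "A \<subseteq> E"
  then have "set_pmf (\<sigma> h A) \<subseteq> insert (cur_pos r h) {w. {cur_pos r h, w} \<in> A}"
    if "\<sigma> \<in> {\<sigma>\<^sub>1, \<sigma>\<^sub>2}" for \<sigma>
    using assms that unfolding searcher_strategy_def by blast
  moreover have "set_pmf (mix_strategy E p l \<sigma>\<^sub>1 \<sigma>\<^sub>2 h A) \<subseteq> set_pmf (\<sigma>\<^sub>1 h A) \<union> set_pmf (\<sigma>\<^sub>2 h A)"
    unfolding mix_strategy_def mix_pmf_odds_def by (rule set_mix_pmf)
  ultimately show
    "set_pmf (mix_strategy E p l \<sigma>\<^sub>1 \<sigma>\<^sub>2 h A) \<subseteq> insert (cur_pos r h) {w. {cur_pos r h, w} \<in> A}"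
    by blast
qed

lemma unfound_prob_mix_strategy:
  assumes "0 \<le> l" "l \<le> 1"
  shows "unfound_prob E r p e (mix_strategy E p l \<sigma>\<^sub>1 \<sigma>\<^sub>2) t =
           l * unfound_prob E r p e \<sigma>\<^sub>1 t + (1 - l) * unfound_prob E r p e \<sigma>\<^sub>2 t"
  unfolding unfound_prob_def hist_pmf_mix_strategy[OF assms] prob_mix_pmf[OF assms] ..

lemma payoff_mix_strategy:
  assumes "0 \<le> l" "l \<le> 1"
  shows "payoff E r p e (mix_strategy E p l \<sigma>\<^sub>1 \<sigma>\<^sub>2) =
           ennreal l * payoff E r p e \<sigma>\<^sub>1 + ennreal (1 - l) * payoff E r p e \<sigma>\<^sub>2"
proof -
  have "payoff E r p e (mix_strategy E p l \<sigma>\<^sub>1 \<sigma>\<^sub>2) =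
      (\<Sum>t. ennreal l * ennreal (unfound_prob E r p e \<sigma>\<^sub>1 t) +
             ennreal (1 - l) * ennreal (unfound_prob E r p e \<sigma>\<^sub>2 t))"
    unfolding payoff_eq_suminf unfound_prob_mix_strategy[OF assms] using assms
    by (intro suminf_cong) (simp add: ennreal_plus ennreal_mult unfound_prob_nonneg)
  also have "\<dots> = (\<Sum>t. ennreal l * ennreal (unfound_prob E r p e \<sigma>\<^sub>1 t)) +
      (\<Sum>t. ennreal (1 - l) * ennreal (unfound_prob E r p e \<sigma>\<^sub>2 t))"
    by (rule suminf_add[symmetric]) (auto intro: summableI)
  also have "\<dots> = ennreal l * payoff E r p e \<sigma>\<^sub>1 + ennreal (1 - l) * payoff E r p e \<sigma>\<^sub>2"
    unfolding payoff_eq_suminf by (simp add: ennreal_suminf_cmult)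
  finally show ?thesis .
qed

section \<open>Sequential compactness and lower semicontinuity\<close>

lemma pmf_limit_exists:
  fixes M :: "nat \<Rightarrow> 'a pmf"
  assumes "finite V" "\<And>k. set_pmf (M k) \<subseteq> V" "\<And>v. v \<in> V \<Longrightarrow> convergent (\<lambda>k. pmf (M k) v)"
  shows "\<exists>N. \<forall>v. (\<lambda>k. pmf (M k) v) \<longlonglongrightarrow> pmf N v"
proof -
  define L where "L v = lim (\<lambda>k. pmf (M k) v)" for v
  have lim: "(\<lambda>k. pmf (M k) v) \<longlonglongrightarrow> L v" if "v \<in> V" for v
    using assms(3)[OF that] unfolding L_def by (simp add: convergent_LIMSEQ_iff)
  have "\<forall>v\<in>V. 0 \<le> L v" using LIMSEQ_le_const[OF lim] by simp
  moreover have "sum L V = 1"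
  proof -
    have "(\<lambda>k. \<Sum>v\<in>V. pmf (M k) v) \<longlonglongrightarrow> sum L V" by (intro tendsto_sum lim)
    moreover have "(\<Sum>v\<in>V. pmf (M k) v) = 1" for k using assms(1,2) by (rule sum_pmf_eq_1)
    ultimately show ?thesis by (simp add: LIMSEQ_const_iff)
  qed
  ultimately obtain N where N: "set_pmf N \<subseteq> V" "\<forall>v\<in>V. pmf N v = L v"
    using pmf_of_weights_exists[OF assms(1)] by blast
  have "(\<lambda>k. pmf (M k) v) \<longlonglongrightarrow> pmf N v" for v
  proof (cases "v \<in> V")
    case False
    then have "pmf N v = 0" "pmf (M k) v = 0" for k
      using assms(2) N(1) by (auto simp: pmf_eq_0_set_pmf)
    then show ?thesis by simp
  qed (use lim N(2) in simp)
  then show ?thesis by blast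
qed

lemma set_pmf_limit:
  assumes "(\<lambda>k. pmf (M k) v) \<longlonglongrightarrow> pmf N v" "v \<in> set_pmf N"
  shows "\<exists>k. v \<in> set_pmf (M k)"
proof -
  have "eventually (\<lambda>k. pmf (M k) v > 0) sequentially"
    using assms by (intro order_tendstoD(1)) (auto simp: pmf_positive)
  then show ?thesis by (auto simp: set_pmf_eq' dest: eventually_happens)
qed

lemma hist_pmf_tendsto:
  fixes ss :: "nat \<Rightarrow> 'v strat"
  assumes g: "graph_ok V E r" and ss: "\<And>k. searcher_strategy E r (ss k)" and \<sigma>: "searcher_strategy E r \<sigma>"
    and lim: "\<And>h A v. set h \<subseteq> Pow E \<times> V \<Longrightarrow> A \<subseteq> E \<Longrightarrow> (\<lambda>k. pmf (ss k h A) v) \<longlonglongrightarrow> pmf (\<sigma> h A) v"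
  shows "(\<lambda>k. pmf (hist_pmf E p (ss k) t) h) \<longlonglongrightarrow> pmf (hist_pmf E p \<sigma> t) h"
proof (induction t arbitrary: h)
  case 0
  show ?case by simp
next
  case (Suc t)
  show ?case
  proof (cases "h \<in> histories V E (Suc t)")
    case False
    have "pmf (hist_pmf E p \<sigma>' (Suc t)) h = 0" if "searcher_strategy E r \<sigma>'" for \<sigma>'
      using set_hist_pmf_histories[OF g that] False by (meson pmf_eq_0_set_pmf subsetD)
    then show ?thesis using ss \<sigma> by simp
  next
    case True
    then obtain h' A v where h: "h = h' @ [(A, v)]" and "set h' \<subseteq> Pow E \<times> V" "A \<subseteq> E"
      unfolding histories_def by (cases h rule: rev_cases) auto
    then show ?thesis
      unfolding h pmf_hist_pmf_snoc by (intro tendsto_mult Suc.IH tendsto_const lim)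
  qed
qed

text \<open>
  Behaviour strategies form a sequentially compact set: a diagonal subsequence makes every one of
  the countably many move probabilities converge.
\<close>

lemma searcher_strategies_seq_compact:
  fixes ss :: "nat \<Rightarrow> 'v strat"
  assumes g: "graph_ok V E r" and ss: "\<And>n. searcher_strategy E r (ss n)"
  shows "\<exists>\<sigma> \<phi>. searcher_strategy E r \<sigma> \<and> strict_mono \<phi> \<and>
           (\<forall>t h. (\<lambda>k. pmf (hist_pmf E p (ss (\<phi> k)) t) h) \<longlonglongrightarrow> pmf (hist_pmf E p \<sigma> t) h)"
proof -
  note fin = graph_ok_finite[OF g]
  define adm where "adm h A \<longleftrightarrow> set h \<subseteq> Pow E \<times> V \<and> A \<subseteq> E" for h A
  define Q where "Q = lists (Pow E \<times> V) \<times> Pow E \<times> V"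
  have "countable Q"
    unfolding Q_def using fin by (intro countable_SIGMA countable_lists countable_finite) auto
  then obtain \<phi> L where \<phi>: "strict_mono \<phi>"
    and L: "\<forall>q\<in>Q. (\<lambda>k. (case q of (h, A, v) \<Rightarrow> pmf (ss (\<phi> k) h A) v)) \<longlonglongrightarrow> L q"
    using countable_bounded_convergent_subseq[where I=Q and f="\<lambda>n (h, A, v). pmf (ss n h A) v" and B=1]
    by (auto simp: pmf_le_1)
  have "\<exists>M. \<forall>v. (\<lambda>k. pmf (ss (\<phi> k) h A) v) \<longlonglongrightarrow> pmf M v" if "adm h A" for h A
  proof (rule pmf_limit_exists[OF fin(1)])
    show "set_pmf (ss (\<phi> k) h A) \<subseteq> V" for k
      by (rule subsetI, rule searcher_step_in[OF g ss]) (use that in \<open>auto simp: adm_def\<close>)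
    show "convergent (\<lambda>k. pmf (ss (\<phi> k) h A) v)" if "v \<in> V" for v
    proof -
      have "(h, A, v) \<in> Q" using \<open>adm h A\<close> that unfolding adm_def Q_def by (auto simp: in_lists_conv_set)
      then show ?thesis using L unfolding convergent_def by fastforce
    qed
  qed
  then have "\<forall>h A. \<exists>M. adm h A \<longrightarrow> (\<forall>v. (\<lambda>k. pmf (ss (\<phi> k) h A) v) \<longlonglongrightarrow> pmf M v)" by blast
  then obtain M where M: "\<And>h A v. adm h A \<Longrightarrow> (\<lambda>k. pmf (ss (\<phi> k) h A) v) \<longlonglongrightarrow> pmf (M h A) v"
    by metis
  define \<sigma> where "\<sigma> h A = (if adm h A then M h A else return_pmf (cur_pos r h))" for h A
  have "searcher_strategy E r \<sigma>"
    unfolding searcher_strategy_def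
  proof (intro allI impI subsetI)
    fix h A v assume A: "A \<subseteq> E" and v: "v \<in> set_pmf (\<sigma> h A)"
    show "v \<in> insert (cur_pos r h) {w. {cur_pos r h, w} \<in> A}"
    proof (cases "adm h A")
      case True
      then have "v \<in> set_pmf (M h A)" using v by (simp add: \<sigma>_def)
      then obtain k where "v \<in> set_pmf (ss (\<phi> k) h A)"
        using set_pmf_limit[OF M[OF True]] by blast
      then show ?thesis using ss[of "\<phi> k"] A unfolding searcher_strategy_def by blast
    qed (use v in \<open>simp add: \<sigma>_def\<close>)
  qed
  moreover have "(\<lambda>k. pmf (hist_pmf E p (ss (\<phi> k)) t) h) \<longlonglongrightarrow> pmf (hist_pmf E p \<sigma> t) h" for t h
    using g ss calculation by (rule hist_pmf_tendsto) (simp add: \<sigma>_def M adm_def)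
  ultimately show ?thesis using \<phi> by blast
qed

lemma prob_tendsto_of_pmf_tendsto:
  assumes "finite H" "\<And>k. set_pmf (M k) \<subseteq> H" "set_pmf N \<subseteq> H" "\<And>h. (\<lambda>k. pmf (M k) h) \<longlonglongrightarrow> pmf N h"
  shows "(\<lambda>k. measure_pmf.prob (M k) S) \<longlonglongrightarrow> measure_pmf.prob N S"
proof -
  have prob: "measure_pmf.prob P S = (\<Sum>h\<in>H \<inter> S. pmf P h)" if "set_pmf P \<subseteq> H" for P
  proof -
    have "measure_pmf.prob P S = measure_pmf.prob P (S \<inter> set_pmf P)" by (simp add: measure_Int_set_pmf)
    also have "S \<inter> set_pmf P = (H \<inter> S) \<inter> set_pmf P" using that by blast
    also have "measure_pmf.prob P \<dots> = measure_pmf.prob P (H \<inter> S)" by (simp add: measure_Int_set_pmf)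
    also have "\<dots> = (\<Sum>h\<in>H \<inter> S. pmf P h)" using assms(1) by (simp add: measure_measure_pmf_finite)
    finally show ?thesis .
  qed
  show ?thesis
    unfolding prob[OF assms(2)] prob[OF assms(3)] by (intro tendsto_sum assms(4))
qed

lemma payoff_lower_semicontinuous:
  fixes ss :: "nat \<Rightarrow> 'v strat"
  assumes g: "graph_ok V E r" and ss: "\<And>k. searcher_strategy E r (ss k)" and \<sigma>: "searcher_strategy E r \<sigma>"
    and lim: "\<And>t h. (\<lambda>k. pmf (hist_pmf E p (ss k) t) h) \<longlonglongrightarrow> pmf (hist_pmf E p \<sigma> t) h"
    and b: "\<And>k. payoff E r p e (ss k) \<le> b k" and "b \<longlonglongrightarrow> B"
  shows "payoff E r p e \<sigma> \<le> B"
proof -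
  define a where "a k t = unfound_prob E r p e (ss k) t" for k t
  define a' where "a' t = unfound_prob E r p e \<sigma> t" for t
  have "(\<lambda>k. a k t) \<longlonglongrightarrow> a' t" for t
    unfolding a_def a'_def unfound_prob_def using graph_ok_finite[OF g]
    by (intro prob_tendsto_of_pmf_tendsto[OF finite_histories set_hist_pmf_histories[OF g ss]
          set_hist_pmf_histories[OF g \<sigma>] lim])
  have "(\<Sum>t<T. ennreal (a' t)) \<le> B" for T
  proof (rule LIMSEQ_le)
    show "(\<lambda>k. \<Sum>t<T. ennreal (a k t)) \<longlonglongrightarrow> (\<Sum>t<T. ennreal (a' t))"
      by (intro tendsto_sum tendsto_ennrealI \<open>(\<lambda>k. a k _) \<longlonglongrightarrow> a' _\<close>)
    have "(\<Sum>t<T. ennreal (a k t)) \<le> b k" for k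
    proof -
      have "(\<Sum>t<T. ennreal (a k t)) \<le> (\<Sum>t. ennreal (a k t))"
        by (intro sum_le_suminf) (auto intro: summableI)
      also have "\<dots> \<le> b k" using b[of k] unfolding payoff_eq_suminf a_def .
      finally show ?thesis .
    qed
    then show "\<exists>N. \<forall>k\<ge>N. (\<Sum>t<T. ennreal (a k t)) \<le> b k" by blast
  qed fact
  then have "(SUP T. \<Sum>t<T. ennreal (a' t)) \<le> B" by (intro SUP_least)
  then show ?thesis unfolding payoff_eq_suminf a'_def suminf_eq_SUP .
qed

lemma payoff_seq_compact:
  fixes ss :: "nat \<Rightarrow> 'v strat"
  assumes g: "graph_ok V E r" and ss: "\<And>n. searcher_strategy E r (ss n)"
  shows "\<exists>\<sigma>. searcher_strategy E r \<sigma> \<and>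
           (\<forall>e b B. (\<forall>n. payoff E r p e (ss n) \<le> b n) \<longrightarrow> b \<longlonglongrightarrow> B \<longrightarrow> payoff E r p e \<sigma> \<le> B)"
proof -
  obtain \<sigma> \<phi> where \<sigma>: "searcher_strategy E r \<sigma>" "strict_mono \<phi>"
    "\<forall>t h. (\<lambda>k. pmf (hist_pmf E p (ss (\<phi> k)) t) h) \<longlonglongrightarrow> pmf (hist_pmf E p \<sigma> t) h"
    using searcher_strategies_seq_compact[where ss=ss and p=p, OF g ss] by blast
  have "payoff E r p e \<sigma> \<le> B" if b: "\<forall>n. payoff E r p e (ss n) \<le> b n" "b \<longlonglongrightarrow> B" for e b B
  proof (rule payoff_lower_semicontinuous[where ss="ss \<circ> \<phi>", OF g _ \<sigma>(1)])
    show "searcher_strategy E r ((ss \<circ> \<phi>) k)" for k using ss by simp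
    show "(\<lambda>k. pmf (hist_pmf E p ((ss \<circ> \<phi>) k) t) h) \<longlonglongrightarrow> pmf (hist_pmf E p \<sigma> t) h" for t h
      using \<sigma>(3) by simp
    show "payoff E r p e ((ss \<circ> \<phi>) k) \<le> (b \<circ> \<phi>) k" for k using b(1) by simp
    show "(b \<circ> \<phi>) \<longlonglongrightarrow> B" using LIMSEQ_subseq_LIMSEQ[OF b(2) \<sigma>(2)] .
  qed
  then show ?thesis using \<sigma>(1) by blast
qed

section \<open>Covering walks and tours\<close>

fun is_walk :: "'v set set \<Rightarrow> 'v \<Rightarrow> 'v list \<Rightarrow> bool" where
  "is_walk E u [] \<longleftrightarrow> True"
| "is_walk E u (w # ws) \<longleftrightarrow> {u, w} \<in> E \<and> is_walk E w ws"

fun walk_edges :: "'v \<Rightarrow> 'v list \<Rightarrow> 'v set set" where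
  "walk_edges u [] = {}"
| "walk_edges u (w # ws) = insert {u, w} (walk_edges w ws)"

lemma is_walk_append: "is_walk E u (xs @ ys) \<longleftrightarrow> is_walk E u xs \<and> is_walk E (last (u # xs)) ys"
  by (induction xs arbitrary: u) auto

lemma walk_edges_append: "walk_edges u (xs @ ys) = walk_edges u xs \<union> walk_edges (last (u # xs)) ys"
  by (induction xs arbitrary: u) auto

lemma last_Cons_append: "last (u # xs @ ys) = last (last (u # xs) # ys)"
  by (induction xs arbitrary: u) auto

lemma is_walk_nth: "is_walk E u ws \<Longrightarrow> k < length ws \<Longrightarrow> {(u # ws) ! k, ws ! k} \<in> E"
  by (induction ws arbitrary: u k) (auto simp: nth_Cons split: nat.split)

lemma last_Cons_take: "k \<le> length ws \<Longrightarrow> last (u # take k ws) = (u # ws) ! k"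
  by (induction ws arbitrary: u k) (auto simp: take_Cons split: nat.split)

lemma walk_edges_take_Suc:
  assumes "k < length ws"
  shows "walk_edges u (take (Suc k) ws) = insert {(u # ws) ! k, ws ! k} (walk_edges u (take k ws))"
  using assms last_Cons_take[of k ws u] by (simp add: take_Suc_conv_app_nth walk_edges_append)

lemma walk_of_rtrancl:
  "(x, y) \<in> {(u, w). {u, w} \<in> E}\<^sup>* \<Longrightarrow> \<exists>ws. is_walk E x ws \<and> last (x # ws) = y"
proof (induction rule: rtrancl_induct)
  case base
  show ?case by (rule exI[of _ "[]"]) simp
next
  case (step y z)
  then obtain ws where "is_walk E x ws" "last (x # ws) = y" by blast
  with step(2) show ?case by (intro exI[of _ "ws @ [z]"]) (simp add: is_walk_append)
qed

lemma graph_ok_walk: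
  assumes g: "graph_ok V E r" and "x \<in> V" "y \<in> V"
  shows "\<exists>ws. is_walk E x ws \<and> last (x # ws) = y"
proof -
  let ?R = "{(u, w). {u, w} \<in> E}"
  have "sym (?R\<^sup>*)" by (intro sym_rtrancl) (auto simp: sym_def insert_commute)
  then have "(x, r) \<in> ?R\<^sup>*" using g \<open>x \<in> V\<close> unfolding graph_ok_def by (blast dest: symD)
  moreover have "(r, y) \<in> ?R\<^sup>*" using g \<open>y \<in> V\<close> unfolding graph_ok_def by blast
  ultimately show ?thesis by (blast intro: walk_of_rtrancl rtrancl_trans)
qed

lemma closed_walk_covering:
  assumes g: "graph_ok V E r" and u: "u \<in> V" and F: "finite F" "F \<subseteq> E"
  shows "\<exists>ws. is_walk E u ws \<and> last (u # ws) = u \<and> F \<subseteq> walk_edges u ws"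
  using F
proof (induction F rule: finite_induct)
  case empty
  show ?case by (rule exI[of _ "[]"]) simp
next
  case (insert e F)
  have "F \<subseteq> E" using insert.prems by blast
  then obtain ws where ws: "is_walk E u ws" "last (u # ws) = u" "F \<subseteq> walk_edges u ws"
    using insert.IH by blast
  have "e \<in> E" using insert.prems by blast
  then obtain a b where ab: "e = {a, b}" "a \<in> V" "b \<in> V" using g unfolding graph_ok_def by blast
  obtain ws\<^sub>1 where ws\<^sub>1: "is_walk E u ws\<^sub>1" "last (u # ws\<^sub>1) = a"
    using graph_ok_walk[OF g u ab(2)] by blast
  obtain ws\<^sub>2 where ws\<^sub>2: "is_walk E b ws\<^sub>2" "last (b # ws\<^sub>2) = u"
    using graph_ok_walk[OF g ab(3) u] by blast
  have last_a: "last (u # ws @ ws\<^sub>1) = a" by (simp only: last_Cons_append ws(2) ws\<^sub>1(2))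
  let ?ws = "ws @ ws\<^sub>1 @ [b] @ ws\<^sub>2"
  have "is_walk E u ?ws"
    using ws(1,2) ws\<^sub>1 ws\<^sub>2 \<open>e \<in> E\<close> ab(1) last_a
    by (simp add: is_walk_append last_Cons_append del: append_assoc)
  moreover have "last (u # ?ws) = u"
    using ws\<^sub>2(2) by (simp add: last_Cons_append del: append_assoc)
  moreover have "insert e F \<subseteq> walk_edges u ?ws"
  proof -
    have "walk_edges u ?ws = walk_edges u ws \<union> walk_edges u ws\<^sub>1 \<union> {e} \<union> walk_edges b ws\<^sub>2"
      using ws(2) ws\<^sub>1(2) ab(1) by (simp add: walk_edges_append last_Cons_append Un_assoc)
    then show ?thesis using ws(3) by auto
  qed
  ultimately have "is_walk E u ?ws \<and> last (u # ?ws) = u \<and> insert e F \<subseteq> walk_edges u ?ws" by blast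
  then show ?case by (rule exI)
qed

lemma covering_walk:
  assumes "graph_ok V E r" "u \<in> V"
  shows "\<exists>ws. is_walk E u ws \<and> E \<subseteq> walk_edges u ws"
  using closed_walk_covering[OF assms graph_ok_finite(2)[OF assms(1)] subset_refl] by blast

fun moves :: "'v \<Rightarrow> 'v hist \<Rightarrow> nat" where
  "moves u [] = 0"
| "moves u ((A, w) # h) = (if u = w then 0 else 1) + moves w h"

lemma moves_append: "moves u (h\<^sub>1 @ h\<^sub>2) = moves u h\<^sub>1 + moves (cur_pos u h\<^sub>1) h\<^sub>2"
  by (induction h\<^sub>1 arbitrary: u) auto

text \<open>
  The strategy \<open>tour r W \<sigma> T\<close> plays \<open>\<sigma>\<close> for \<open>T\<close> stages and then, from the
  position \<open>u\<close> reached at stage \<open>T\<close>, follows the walk \<open>W u\<close>, crossing its next edge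
  whenever that edge is active.  Since edges join distinct vertices, every move after stage \<open>T\<close> is a
  step along the walk, so \<open>tour_index\<close> is the number of steps taken.
\<close>

definition tour_base :: "'v \<Rightarrow> nat \<Rightarrow> 'v hist \<Rightarrow> 'v" where
  "tour_base r T h = cur_pos r (take T h)"

definition tour_index :: "'v \<Rightarrow> nat \<Rightarrow> 'v hist \<Rightarrow> nat" where
  "tour_index r T h = moves (tour_base r T h) (drop T h)"

definition tour_move :: "'v \<Rightarrow> ('v \<Rightarrow> 'v list) \<Rightarrow> nat \<Rightarrow> 'v hist \<Rightarrow> 'v set set \<Rightarrow> 'v" where
  "tour_move r W T h A =
     (if tour_index r T h < length (W (tour_base r T h)) \<and>
         {cur_pos r h, W (tour_base r T h) ! tour_index r T h} \<in> A
      then W (tour_base r T h) ! tour_index r T h else cur_pos r h)"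

definition tour :: "'v \<Rightarrow> ('v \<Rightarrow> 'v list) \<Rightarrow> 'v strat \<Rightarrow> nat \<Rightarrow> 'v strat" where
  "tour r W \<sigma> T h A = (if length h < T then \<sigma> h A else return_pmf (tour_move r W T h A))"

lemma searcher_strategy_tour:
  "searcher_strategy E r \<sigma> \<Longrightarrow> searcher_strategy E r (tour r W \<sigma> T)"
  unfolding searcher_strategy_def tour_def tour_move_def by auto

lemma hist_pmf_tour_le:
  "t \<le> T \<Longrightarrow> hist_pmf E p (tour r W \<sigma> T) t = hist_pmf E p \<sigma> t"
proof (induction t)
  case (Suc t)
  show ?case
    unfolding hist_pmf.simps(2) Suc.IH[OF Suc_leD[OF Suc.prems]]
  proof (intro bind_pmf_cong refl)
    fix h A assume "h \<in> set_pmf (hist_pmf E p \<sigma> t)"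
    then have "length h < T" using set_hist_pmf_length Suc.prems by fastforce
    then show "map_pmf (\<lambda>v. h @ [(A, v)]) (tour r W \<sigma> T h A) = map_pmf (\<lambda>v. h @ [(A, v)]) (\<sigma> h A)"
      by (simp add: tour_def)
  qed
qed simp

lemma cur_pos_tour_base: "cur_pos r h = cur_pos (tour_base r T h) (drop T h)"
  unfolding tour_base_def by (metis append_take_drop_id cur_pos_append)

lemma traversed_tour_base:
  "traversed r h = traversed r (take T h) \<union> traversed (tour_base r T h) (drop T h)"
  unfolding tour_base_def by (metis append_take_drop_id traversed_append)

lemma tour_base_snoc: "T \<le> length h \<Longrightarrow> tour_base r T (h @ [x]) = tour_base r T h"
  unfolding tour_base_def by simp

lemma tour_index_snoc:
  "T \<le> length h \<Longrightarrow> tour_index r T (h @ [(A, v)]) = tour_index r T h + (if cur_pos r h = v then 0 else 1)"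
  unfolding tour_index_def using cur_pos_tour_base[of r h T] by (simp add: tour_base_snoc moves_append)

lemma traversed_snoc:
  "traversed u (h @ [(A, v)]) = traversed u h \<union> (if cur_pos u h = v then {} else {{cur_pos u h, v}})"
  by (simp add: traversed_append)

lemma tour_base_in:
  assumes g: "graph_ok V E r" and \<sigma>: "searcher_strategy E r \<sigma>" and h: "h \<in> set_pmf (hist_pmf E p \<sigma> t)"
  shows "tour_base r T h \<in> V"
proof -
  have "set h \<subseteq> Pow E \<times> V"
    using set_hist_pmf_histories[OF g \<sigma>] h unfolding histories_def by blast
  then have "set (take T h) \<subseteq> Pow E \<times> V" using set_take_subset[of T h] by blast
  then show ?thesis unfolding tour_base_def by (rule cur_pos_in[OF graph_ok_finite(3)[OF g]])
qed

definition tour_inv :: "'v \<Rightarrow> ('v \<Rightarrow> 'v list) \<Rightarrow> nat \<Rightarrow> 'v hist \<Rightarrow> bool" where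
  "tour_inv r W T h \<longleftrightarrow>
     (let u = tour_base r T h; k = tour_index r T h in
      k \<le> length (W u) \<and> cur_pos r h = (u # W u) ! k \<and>
      walk_edges u (take k (W u)) \<subseteq> traversed u (drop T h))"

lemma tour_inv_snoc:
  assumes g: "graph_ok V E r" and walk: "is_walk E (tour_base r T h) (W (tour_base r T h))"
    and len: "T \<le> length h" and inv: "tour_inv r W T h"
  shows "tour_inv r W T (h @ [(A, tour_move r W T h A)])"
proof -
  define u k c ws where "u = tour_base r T h" "k = tour_index r T h" "c = cur_pos r h" "ws = W u"
  note defs = this
  have inv': "k \<le> length ws" "c = (u # ws) ! k" "walk_edges u (take k ws) \<subseteq> traversed u (drop T h)"
    using inv unfolding tour_inv_def defs Let_def by auto
  have c: "cur_pos u (drop T h) = c" using cur_pos_tour_base[of r h T] unfolding defs by simp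
  show ?thesis
  proof (cases "k < length ws \<and> {c, ws ! k} \<in> A")
    case True
    then have move: "tour_move r W T h A = ws ! k" unfolding tour_move_def defs by simp
    have "{c, ws ! k} \<in> E" using is_walk_nth[OF walk[folded defs(1,4)]] True inv'(2) by simp
    then have "c \<noteq> ws ! k" using graph_ok_edge(3)[OF g] by blast
    moreover have "walk_edges u (take (Suc k) ws) = insert {c, ws ! k} (walk_edges u (take k ws))"
      using walk_edges_take_Suc[of k ws u] True inv'(2) by simp
    ultimately show ?thesis
      using True inv' len move c
      by (simp add: tour_inv_def tour_base_snoc tour_index_snoc traversed_snoc defs[symmetric] Let_def
          subset_insertI2)
  next
    case False
    then have "tour_move r W T h A = c" unfolding tour_move_def defs by auto
    then show ?thesis
      using inv' len c
      by (simp add: tour_inv_def tour_base_snoc tour_index_snoc traversed_snoc defs[symmetric] Let_def)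
  qed
qed

lemma tour_inv_hist_pmf:
  assumes g: "graph_ok V E r" and \<sigma>: "searcher_strategy E r \<sigma>" and walks: "\<forall>u\<in>V. is_walk E u (W u)"
    and h: "h \<in> set_pmf (hist_pmf E p (tour r W \<sigma> T) (T + d))"
  shows "tour_inv r W T h"
  using h
proof (induction d arbitrary: h)
  case 0
  then have "length h = T" by (simp add: set_hist_pmf_length)
  then show ?case by (simp add: tour_inv_def tour_index_def tour_base_def)
next
  case (Suc d)
  then obtain h' A v where h': "h' \<in> set_pmf (hist_pmf E p (tour r W \<sigma> T) (T + d))"
    and v: "v \<in> set_pmf (tour r W \<sigma> T h' A)" and h: "h = h' @ [(A, v)]"
    by (auto simp: hist_pmf.simps(2))
  have "length h' = T + d" using h' by (simp add: set_hist_pmf_length)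
  then have len: "T \<le> length h'" and "v = tour_move r W T h' A" using v by (simp_all add: tour_def)
  moreover have "tour_base r T h' \<in> V"
    using tour_base_in[OF g searcher_strategy_tour[OF \<sigma>] h'] .
  ultimately show ?case
    using tour_inv_snoc[OF g _ len Suc.IH[OF h']] walks h by blast
qed

section \<open>Strategies with finite payoffs\<close>

lemma active_pmf_marginal:
  assumes "finite E" "e \<in> E"
  shows "map_pmf (\<lambda>A. e \<in> A) (active_pmf E p) = bernoulli_pmf (p e)"
proof -
  have "map_pmf (\<lambda>A. e \<in> A) (active_pmf E p) = map_pmf (\<lambda>f. f e) (Pi_pmf E False (\<lambda>e. bernoulli_pmf (p e)))"
    unfolding active_pmf_def map_pmf_comp using assms(2) by (intro map_pmf_cong) auto
  also have "\<dots> = bernoulli_pmf (p e)"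
    using Pi_pmf_component[OF assms(1), of e False "\<lambda>e. bernoulli_pmf (p e)"] assms(2) by simp
  finally show ?thesis .
qed

lemma nn_integral_active_pmf_edge:
  assumes "finite E" "e \<in> E" "0 \<le> p e" "p e \<le> 1"
  shows "(\<integral>\<^sup>+A. G (e \<in> A) \<partial>active_pmf E p) = G True * ennreal (p e) + G False * ennreal (1 - p e)"
proof -
  have "(\<integral>\<^sup>+A. G (e \<in> A) \<partial>active_pmf E p) = (\<integral>\<^sup>+b. G b \<partial>map_pmf (\<lambda>A. e \<in> A) (active_pmf E p))"
    by simp
  also have "\<dots> = G True * ennreal (p e) + G False * ennreal (1 - p e)"
    unfolding active_pmf_marginal[OF assms(1,2)] using assms(3,4) by (simp add: nn_integral_bernoulli_pmf)
  finally show ?thesis .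
qed

locale tour_bound =
  fixes V :: "'v set" and E :: "'v set set" and r :: 'v and p :: "'v set \<Rightarrow> real"
    and W :: "'v \<Rightarrow> 'v list" and \<sigma> :: "'v strat" and T :: nat and f :: "'v set"
  assumes graph: "graph_ok V E r"
    and p: "\<forall>e\<in>E. 0 < p e \<and> p e \<le> 1"
    and walks: "\<forall>u\<in>V. is_walk E u (W u) \<and> E \<subseteq> walk_edges u (W u)"
    and \<sigma>: "searcher_strategy E r \<sigma>"
    and f: "f \<in> E"
begin

abbreviation \<tau> :: "'v strat" where
  "\<tau> \<equiv> tour r W \<sigma> T"

definition q :: real where
  "q = Min (p ` E)"

definition \<theta> :: real where
  "\<theta> = 1 - q / 2"

definition L :: nat where
  "L = Max ((\<lambda>u. length (W u)) ` V)"

text \<open>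
  The potential is at least \<open>1\<close> while \<open>f\<close> has not been traversed, because the walk covers \<open>f\<close>.
  Since the next walk edge is active with probability at least \<open>q\<close>, it shrinks in expectation
  by the factor \<open>\<theta>\<close> at every stage after \<open>T\<close>.
\<close>

definition potential :: "'v hist \<Rightarrow> real" where
  "potential h = (if f \<in> traversed r (take T h) then 0
                  else 2 ^ (length (W (tour_base r T h)) - tour_index r T h) - 1)"

lemma finite_E: "finite E"
  using graph_ok_finite[OF graph] by simp

lemma q_pos: "0 < q"
  unfolding q_def using finite_E f p by (subst Min_gr_iff) auto

lemma q_le: "e \<in> E \<Longrightarrow> q \<le> p e"
  unfolding q_def using finite_E by (intro Min_le) auto

lemma \<theta>_bounds: "0 \<le> \<theta>" "\<theta> < 1"
  using q_pos q_le[OF f] p f unfolding \<theta>_def by auto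

lemma potential_le:
  assumes "h \<in> set_pmf (hist_pmf E p \<tau> t)"
  shows "potential h \<le> 2 ^ L - 1"
proof -
  have "tour_base r T h \<in> V" using tour_base_in[OF graph searcher_strategy_tour[OF \<sigma>] assms] .
  then have "length (W (tour_base r T h)) \<le> L"
    unfolding L_def using graph_ok_finite(1)[OF graph] by (intro Max_ge) auto
  then have "(2::real) ^ (length (W (tour_base r T h)) - tour_index r T h) \<le> 2 ^ L"
    by (intro power_increasing) auto
  then show ?thesis unfolding potential_def by simp
qed

lemma tour_inv: "h \<in> set_pmf (hist_pmf E p \<tau> (T + d)) \<Longrightarrow> tour_inv r W T h"
  using tour_inv_hist_pmf[OF graph \<sigma>] walks by blast

lemma one_le_potential:
  assumes h: "h \<in> set_pmf (hist_pmf E p \<tau> (T + d))" and not_found: "f \<notin> traversed r h"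
  shows "1 \<le> potential h"
proof -
  define u k where "u = tour_base r T h" "k = tour_index r T h"
  have "u \<in> V" unfolding u_k_def using tour_base_in[OF graph searcher_strategy_tour[OF \<sigma>] h] .
  have not_found': "f \<notin> traversed r (take T h)" "f \<notin> traversed u (drop T h)"
    using not_found traversed_tour_base[of r h T] unfolding u_k_def by auto
  have "k < length (W u)"
  proof (rule ccontr)
    assume "\<not> k < length (W u)"
    then have "E \<subseteq> traversed u (drop T h)"
      using tour_inv[OF h] walks \<open>u \<in> V\<close> unfolding tour_inv_def u_k_def[symmetric] Let_def by auto
    then show False using f not_found'(2) by blast
  qed
  then have "2 ^ 1 \<le> (2::real) ^ (length (W u) - k)" by (intro power_increasing) auto
  then show ?thesis using not_found'(1) unfolding potential_def u_k_def by simp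
qed

lemma potential_snoc:
  assumes h: "h \<in> set_pmf (hist_pmf E p \<tau> (T + d))"
  obtains "\<And>A. potential (h @ [(A, tour_move r W T h A)]) = 0"
  | e X where "e \<in> E" "1 \<le> X" "potential h = 2 * X - 1"
      "\<And>A. potential (h @ [(A, tour_move r W T h A)]) = (if e \<in> A then X - 1 else 2 * X - 1)"
proof -
  define u k c ws where "u = tour_base r T h" "k = tour_index r T h" "c = cur_pos r h" "ws = W u"
  note defs = this
  have len: "T \<le> length h" using set_hist_pmf_length[OF h] by simp
  have inv: "k \<le> length ws" "c = (u # ws) ! k"
    using tour_inv[OF h] unfolding tour_inv_def defs Let_def by auto
  have after: "potential (h @ [(A, v)]) =
      (if f \<in> traversed r (take T h) then 0 else 2 ^ (length ws - (k + (if c = v then 0 else 1))) - 1)" for A v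
    using len by (simp add: potential_def tour_base_snoc tour_index_snoc defs[symmetric])
  consider "f \<in> traversed r (take T h)" | "f \<notin> traversed r (take T h)" "k = length ws"
    | "f \<notin> traversed r (take T h)" "k < length ws"
    using inv(1) by linarith
  then show ?thesis
  proof cases
    case 1
    then show ?thesis using that(1) after by simp
  next
    case 2
    then have "tour_move r W T h A = c" for A unfolding tour_move_def defs by auto
    then show ?thesis using that(1) after 2 by simp
  next
    case 3
    define e X where "e = {c, ws ! k}" "X = (2::real) ^ (length ws - Suc k)"
    have walk: "is_walk E u ws"
      using walks tour_base_in[OF graph searcher_strategy_tour[OF \<sigma>] h] unfolding defs by blast
    have "e \<in> E" unfolding e_X_def using is_walk_nth[OF walk 3(2)] inv(2) by simp
    then have "c \<noteq> ws ! k" using graph_ok_edge(3)[OF graph] unfolding e_X_def by blast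
    have pow: "(2::real) ^ (length ws - k) = 2 * X"
      using 3(2) unfolding e_X_def by (simp flip: power_Suc add: Suc_diff_Suc)
    show ?thesis
    proof (rule that(2))
      show "e \<in> E" by fact
      show "1 \<le> X" unfolding e_X_def by (simp add: one_le_power)
      show "potential h = 2 * X - 1" using 3(1) pow unfolding potential_def defs[symmetric] by simp
      show "potential (h @ [(A, tour_move r W T h A)]) = (if e \<in> A then X - 1 else 2 * X - 1)" for A
        using 3 \<open>c \<noteq> ws ! k\<close> pow unfolding after
        by (auto simp: tour_move_def defs[symmetric] e_X_def)
    qed
  qed
qed

lemma potential_step:
  assumes h: "h \<in> set_pmf (hist_pmf E p \<tau> (T + d))"
  shows "(\<integral>\<^sup>+A. ennreal (potential (h @ [(A, tour_move r W T h A)])) \<partial>active_pmf E p)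
           \<le> ennreal \<theta> * ennreal (potential h)"
proof (cases rule: potential_snoc[OF h])
  case 1
  then show ?thesis by simp
next
  case (2 e X)
  have pe: "q \<le> p e" "0 \<le> p e" "p e \<le> 1" using q_le[OF 2(1)] p 2(1) by auto
  have "(\<integral>\<^sup>+A. ennreal (potential (h @ [(A, tour_move r W T h A)])) \<partial>active_pmf E p) =
      (\<integral>\<^sup>+A. ennreal (if e \<in> A then X - 1 else 2 * X - 1) \<partial>active_pmf E p)"
    using 2(4) by simp
  also have "\<dots> = ennreal (X - 1) * ennreal (p e) + ennreal (2 * X - 1) * ennreal (1 - p e)"
    using nn_integral_active_pmf_edge[where p=p and G="\<lambda>b. ennreal (if b then X - 1 else 2 * X - 1)",
        OF finite_E 2(1) pe(2,3)]
    by simp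
  also have "\<dots> = ennreal ((X - 1) * p e + (2 * X - 1) * (1 - p e))"
    using 2(2) pe by (simp add: ennreal_mult ennreal_plus)
  also have "\<dots> \<le> ennreal (\<theta> * (2 * X - 1))"
  proof (rule ennreal_leI)
    have "(q - p e) * X \<le> 0" using pe 2(2) by (intro mult_nonpos_nonneg) auto
    then show "(X - 1) * p e + (2 * X - 1) * (1 - p e) \<le> \<theta> * (2 * X - 1)"
      unfolding \<theta>_def using q_pos by (simp add: algebra_simps)
  qed
  also have "\<dots> = ennreal \<theta> * ennreal (potential h)"
    using \<theta>_bounds 2(2,3) by (simp add: ennreal_mult)
  finally show ?thesis .
qed

definition expected_potential :: "nat \<Rightarrow> ennreal" where
  "expected_potential t = (\<integral>\<^sup>+h. ennreal (potential h) \<partial>hist_pmf E p \<tau> t)"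

lemma expected_potential_Suc:
  "expected_potential (Suc (T + d)) \<le> ennreal \<theta> * expected_potential (T + d)"
proof -
  have "expected_potential (Suc (T + d)) =
      (\<integral>\<^sup>+h. (\<integral>\<^sup>+A. ennreal (potential (h @ [(A, tour_move r W T h A)])) \<partial>active_pmf E p)
        \<partial>hist_pmf E p \<tau> (T + d))"
  proof -
    have "\<tau> h A = return_pmf (tour_move r W T h A)" if "h \<in> set_pmf (hist_pmf E p \<tau> (T + d))" for h A
      using set_hist_pmf_length[OF that] by (simp add: tour_def)
    then show ?thesis
      unfolding expected_potential_def hist_pmf.simps(2)
      by (auto simp: nn_integral_bind_pmf intro!: nn_integral_cong_AE simp: AE_measure_pmf_iff)
  qed
  also have "\<dots> \<le> (\<integral>\<^sup>+h. ennreal \<theta> * ennreal (potential h) \<partial>hist_pmf E p \<tau> (T + d))"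
    using potential_step by (intro nn_integral_mono_AE) (simp add: AE_measure_pmf_iff)
  also have "\<dots> = ennreal \<theta> * expected_potential (T + d)"
    unfolding expected_potential_def by (rule nn_integral_cmult) simp
  finally show ?thesis .
qed

lemma expected_potential_le: "expected_potential (T + d) \<le> ennreal \<theta> ^ d * expected_potential T"
proof (induction d)
  case (Suc d)
  have "expected_potential (T + Suc d) \<le> ennreal \<theta> * expected_potential (T + d)"
    using expected_potential_Suc[of d] by simp
  also have "\<dots> \<le> ennreal \<theta> * (ennreal \<theta> ^ d * expected_potential T)"
    by (intro mult_left_mono Suc.IH) simp
  finally show ?case by (simp add: mult.assoc)
qed simp

lemma expected_potential_T:
  "expected_potential T \<le> ennreal (2 ^ L - 1) * ennreal (unfound_prob E r p f \<sigma> T)"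
proof -
  define S where "S = {h. f \<notin> traversed r h}"
  have "ennreal (potential h) \<le> ennreal (2 ^ L - 1) * indicator S h"
    if h: "h \<in> set_pmf (hist_pmf E p \<tau> T)" for h
  proof (cases "h \<in> S")
    case True
    then show ?thesis using potential_le[OF h] by (simp add: ennreal_leI)
  next
    case False
    then show ?thesis using set_hist_pmf_length[OF h] by (simp add: S_def potential_def)
  qed
  then have "expected_potential T \<le> (\<integral>\<^sup>+h. ennreal (2 ^ L - 1) * indicator S h \<partial>hist_pmf E p \<tau> T)"
    unfolding expected_potential_def by (intro nn_integral_mono_AE) (simp add: AE_measure_pmf_iff)
  also have "\<dots> = ennreal (2 ^ L - 1) * emeasure (measure_pmf (hist_pmf E p \<sigma> T)) S"
    unfolding hist_pmf_tour_le[OF order_refl] by (simp add: nn_integral_cmult_indicator)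
  also have "\<dots> = ennreal (2 ^ L - 1) * ennreal (unfound_prob E r p f \<sigma> T)"
    unfolding unfound_prob_def S_def by (simp add: measure_pmf.emeasure_eq_measure)
  finally show ?thesis .
qed

lemma unfound_prob_le_expected_potential:
  "ennreal (unfound_prob E r p f \<tau> (T + d)) \<le> expected_potential (T + d)"
proof -
  define S where "S = {h. f \<notin> traversed r h}"
  have "ennreal (unfound_prob E r p f \<tau> (T + d)) = (\<integral>\<^sup>+h. indicator S h \<partial>hist_pmf E p \<tau> (T + d))"
    unfolding unfound_prob_def S_def by (simp add: measure_pmf.emeasure_eq_measure[symmetric])
  also have "\<dots> \<le> expected_potential (T + d)"
    unfolding expected_potential_def using one_le_potential
    by (intro nn_integral_mono_AE) (auto simp: AE_measure_pmf_iff S_def indicator_def intro: ennreal_leI)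
  finally show ?thesis .
qed

lemma payoff_tour_le:
  "payoff E r p f \<tau> \<le>
     (\<Sum>t<T. ennreal (unfound_prob E r p f \<sigma> t)) +
     ennreal ((2 ^ L - 1) / (1 - \<theta>)) * ennreal (unfound_prob E r p f \<sigma> T)"
proof -
  define K where "K = ennreal (2 ^ L - 1) * ennreal (unfound_prob E r p f \<sigma> T)"
  have "payoff E r p f \<tau> =
      (\<Sum>d. ennreal (unfound_prob E r p f \<tau> (d + T))) + (\<Sum>t<T. ennreal (unfound_prob E r p f \<tau> t))"
    unfolding payoff_eq_suminf by (rule suminf_offset) (auto intro: summableI)
  also have "(\<Sum>t<T. ennreal (unfound_prob E r p f \<tau> t)) = (\<Sum>t<T. ennreal (unfound_prob E r p f \<sigma> t))"
    by (intro sum.cong refl) (simp add: unfound_prob_def hist_pmf_tour_le)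
  also have "(\<Sum>d. ennreal (unfound_prob E r p f \<tau> (d + T))) \<le> (\<Sum>d. ennreal \<theta> ^ d * K)"
  proof (intro suminf_le allI)
    fix d
    have "ennreal (unfound_prob E r p f \<tau> (d + T)) \<le> expected_potential (T + d)"
      using unfound_prob_le_expected_potential[of d] by (simp add: add.commute)
    also have "\<dots> \<le> ennreal \<theta> ^ d * K"
      unfolding K_def using expected_potential_le expected_potential_T by (meson mult_left_mono order_trans zero_le)
    finally show "ennreal (unfound_prob E r p f \<tau> (d + T)) \<le> ennreal \<theta> ^ d * K" .
  qed (auto intro: summableI)
  also have "(\<Sum>d. ennreal \<theta> ^ d * K) = (\<Sum>d. ennreal (\<theta> ^ d)) * K"
    using \<theta>_bounds by (simp add: ennreal_suminf_multc ennreal_power)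
  also have "(\<Sum>d. ennreal (\<theta> ^ d)) = ennreal (1 / (1 - \<theta>))"
    using \<theta>_bounds by (intro suminf_ennreal_eq geometric_sums) auto
  also have "ennreal (1 / (1 - \<theta>)) * K =
      ennreal ((2 ^ L - 1) / (1 - \<theta>)) * ennreal (unfound_prob E r p f \<sigma> T)"
    unfolding K_def using \<theta>_bounds
    by (simp add: ennreal_mult[symmetric] mult.assoc[symmetric] one_le_power)
  finally show ?thesis by (simp add: add.commute)
qed

end

lemma unfound_prob_tendsto_zero:
  assumes "payoff E r p e \<sigma> < \<top>"
  shows "unfound_prob E r p e \<sigma> \<longlonglongrightarrow> 0"
proof -
  have "summable (unfound_prob E r p e \<sigma>)"
    using assms unfolding payoff_eq_suminf
    by (intro summable_suminf_not_top) (auto simp: unfound_prob_def)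
  then show ?thesis by (rule summable_LIMSEQ_zero)
qed

text \<open>
  The tour is entered at a stage \<open>T\<close> so late that all finite payoffs have small unfound
  probability at \<open>T\<close>.
\<close>

lemma finite_payoff_approx:
  assumes g: "graph_ok V E r" and p: "\<forall>e\<in>E. 0 < p e \<and> p e \<le> 1" and E: "E \<noteq> {}"
    and \<sigma>: "searcher_strategy E r \<sigma>" and "\<epsilon> > 0"
  shows "\<exists>\<sigma>'. searcher_strategy E r \<sigma>' \<and> (\<forall>e\<in>E. payoff E r p e \<sigma>' < \<top>) \<and>
           (\<forall>e\<in>E. payoff E r p e \<sigma> < \<top> \<longrightarrow> payoff E r p e \<sigma>' \<le> payoff E r p e \<sigma> + ennreal \<epsilon>)"
proof -
  define W where "W u = (SOME ws. is_walk E u ws \<and> E \<subseteq> walk_edges u ws)" for u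
  have W: "\<forall>u\<in>V. is_walk E u (W u) \<and> E \<subseteq> walk_edges u (W u)"
    unfolding W_def using covering_walk[OF g] by (metis (mono_tags, lifting) someI_ex)
  define K where "K = (2 ^ tour_bound.L V W - 1) / (1 - tour_bound.\<theta> E p)"
  have bound: "payoff E r p e (tour r W \<sigma> T) \<le>
      (\<Sum>t<T. ennreal (unfound_prob E r p e \<sigma> t)) + ennreal K * ennreal (unfound_prob E r p e \<sigma> T)"
    if "e \<in> E" for e T
  proof -
    interpret tour_bound V E r p W \<sigma> T e using g p W \<sigma> that by unfold_locales
    show ?thesis using payoff_tour_le unfolding K_def .
  qed
  have "0 \<le> K"
  proof -
    obtain e where "e \<in> E" using E by blast
    interpret tour_bound V E r p W \<sigma> 0 e using g p W \<sigma> \<open>e \<in> E\<close> by unfold_locales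
    show ?thesis unfolding K_def using \<theta>_bounds by (simp add: one_le_power)
  qed
  define F where "F = {e\<in>E. payoff E r p e \<sigma> < \<top>}"
  have "finite F" unfolding F_def using graph_ok_finite(2)[OF g] by simp
  moreover have "0 < \<epsilon> / (K + 1)" using \<open>0 \<le> K\<close> \<open>\<epsilon> > 0\<close> by simp
  ultimately have "eventually (\<lambda>T. \<forall>e\<in>F. unfound_prob E r p e \<sigma> T < \<epsilon> / (K + 1)) sequentially"
    using unfound_prob_tendsto_zero
    by (intro eventually_ball_finite ballI order_tendstoD(2)) (auto simp: F_def)
  then obtain T where T: "\<forall>e\<in>F. unfound_prob E r p e \<sigma> T < \<epsilon> / (K + 1)"
    by (auto simp: eventually_sequentially)
  show ?thesis
  proof (intro exI[of _ "tour r W \<sigma> T"] conjI ballI impI)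
    show "searcher_strategy E r (tour r W \<sigma> T)" using \<sigma> by (rule searcher_strategy_tour)
  next
    fix e assume "e \<in> E"
    have "(\<Sum>t<T. ennreal (unfound_prob E r p e \<sigma> t)) + ennreal K * ennreal (unfound_prob E r p e \<sigma> T) < \<top>"
      by (simp add: unfound_prob_def ennreal_mult_less_top)
    with bound[OF \<open>e \<in> E\<close>] show "payoff E r p e (tour r W \<sigma> T) < \<top>" by (rule le_less_trans)
  next
    fix e assume "e \<in> E" and finite: "payoff E r p e \<sigma> < \<top>"
    have "(\<Sum>t<T. ennreal (unfound_prob E r p e \<sigma> t)) \<le> payoff E r p e \<sigma>"
      unfolding payoff_eq_suminf by (intro sum_le_suminf) (auto intro: summableI)
    moreover have "K * unfound_prob E r p e \<sigma> T \<le> \<epsilon>"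
    proof -
      have "K * unfound_prob E r p e \<sigma> T \<le> K * (\<epsilon> / (K + 1))"
        using T \<open>e \<in> E\<close> finite \<open>0 \<le> K\<close> by (intro mult_left_mono) (auto simp: F_def)
      also have "\<dots> \<le> \<epsilon>" using \<open>0 \<le> K\<close> \<open>\<epsilon> > 0\<close> by (simp add: field_simps)
      finally show ?thesis .
    qed
    then have "ennreal K * ennreal (unfound_prob E r p e \<sigma> T) \<le> ennreal \<epsilon>"
      using \<open>0 \<le> K\<close> by (simp add: ennreal_mult[symmetric] ennreal_leI unfound_prob_def)
    ultimately show "payoff E r p e (tour r W \<sigma> T) \<le> payoff E r p e \<sigma> + ennreal \<epsilon>"
      using bound[OF \<open>e \<in> E\<close>] by (meson add_mono order_trans)
  qed
qed

section \<open>The value of the search game\<close>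

lemma search_game_minimax_game:
  assumes g: "graph_ok V E r" and E: "E \<noteq> {}" and p: "\<forall>e\<in>E. 0 < p e \<and> p e \<le> 1"
  shows "minimax_game E {\<sigma>. searcher_strategy E r \<sigma>} (\<lambda>e \<sigma>. payoff E r p e \<sigma>)"
proof (unfold_locales, goal_cases)
  case 1
  show ?case using graph_ok_finite(2)[OF g] .
next
  case 2
  show ?case by (rule E)
next
  case 3
  show ?case using stay_strategy[of E r] by blast
next
  case (4 \<sigma>\<^sub>1 \<sigma>\<^sub>2 l)
  then show ?case
    by (intro bexI[of _ "mix_strategy E p l \<sigma>\<^sub>1 \<sigma>\<^sub>2"] ballI)
      (simp_all add: payoff_mix_strategy searcher_strategy_mix_strategy)
next
  case (5 ss)
  then show ?case using payoff_seq_compact[OF g, of ss p] by auto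
next
  case (6 \<sigma> \<epsilon>)
  then show ?case using finite_payoff_approx[OF g p E] by auto
qed

theorem mainTheorem4:
  fixes V :: "'v set" and E :: "'v set set" and r :: 'v and p :: "'v set \<Rightarrow> real"
  assumes "graph_ok V E r"
    and "E \<noteq> {}"
    and "\<forall>e\<in>E. 0 < p e \<and> p e \<le> 1"
  shows "\<exists>x\<^sub>0 \<sigma>\<^sub>0. hider_strategy E x\<^sub>0 \<and> searcher_strategy E r \<sigma>\<^sub>0 \<and>
           (\<forall>x. hider_strategy E x \<longrightarrow> mixed_payoff E r p x \<sigma>\<^sub>0 \<le> mixed_payoff E r p x\<^sub>0 \<sigma>\<^sub>0) \<and>
           (\<forall>\<sigma>. searcher_strategy E r \<sigma> \<longrightarrow> mixed_payoff E r p x\<^sub>0 \<sigma>\<^sub>0 \<le> mixed_payoff E r p x\<^sub>0 \<sigma>)"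
proof -
  interpret minimax_game E "{\<sigma>. searcher_strategy E r \<sigma>}" "\<lambda>e \<sigma>. payoff E r p e \<sigma>"
    using assms by (rule search_game_minimax_game)
  show ?thesis
    using saddle_point unfolding mixed_payoff_def hider_strategy_def by auto
qed

end
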